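(* Let $G$ be a finite abelian group and let $M$ be a $\hat G$-linear, left inductive monoid. Fix a non-zero idempotent $e\in M$, let $J=\mathcal J_e$ be its $\mathcal J$-class, and let $G_J=eMe\cap J$. Then: (1) If $V\in\mathrm{Rep}(\hat G_J,\hat G)$ is simple, then $$N(V{\uparrow_e}):=\{x\otimes w\in V{\uparrow_e}\mid eM(x\otimes w)=0\}$$ is the unique maximal subrepresentation of $V{\uparrow_e}$; moreover the simple representation $Q(V)=V{\uparrow_e}/N(V{\uparrow_e})$ has apex $J$, and $Q(V){\downarrow_e}\cong V$ in $\mathrm{Rep}(\hat G_J,\hat G)$. (2) If $V\in\mathrm{Rep}(M,\hat G)$ is simple with apex $J$, then $W=V{\downarrow_e}$ is simple in $\mathrm{Rep}(\hat G_J,\hat G)$, and $W{\uparrow_e}/N(W{\uparrow_e})\cong V$ in $\mathrm{Rep}(M,\hat G)$. In particular, there is a bijection between isomorphism classes of simple objects of $\mathrm{Rep}(M,\hat G)$ with apex $J$ and isomorphism classes of simple objects of $\mathrm{Rep}(\hat G_J,\hat G)$.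
   Context: $G$ is a finite abelian group written multiplicatively and $\hat G=G\sqcup\{0\}$ is the pointed abelian group obtained by adjoining an absorbing element $0$. The category $\mathrm{Vect}_{\hat G}$ has as objects finite pointed sets $(V,0_V)$ with an action of the monoid $\hat G$ (with $0v=0_V$, $g0_V=0_V$) such that $G$ acts freely on $V\setminus\{0_V\}$; morphisms $f:V\to W$ are maps with $f(0_V)=0_W$, $f(gv)=gf(v)$, and such that $f(v_1)=f(v_2)\neq0_W$ implies $Gv_1=Gv_2$. Subspaces are $G$-stable subsets containing $0$; quotients are $V/W=(V\setminus W)\cup\{0_V\}$. A $\hat G$-linear monoid is a finite monoid $M$ with absorbing element $0_M$ containing $G$ as a subgroup of units, such that each element of $G$ commutes with every element of $M$ and $G$ acts freely by translation on $M\setminus\{0_M\}$. $\mathrm{Rep}(M,\hat G)$ is the category of objects $V$ of $\mathrm{Vect}_{\hat G}$ with a monoid action of $M$ by morphisms of $\mathrm{Vect}_{\hat G}$ such that $0_M$ acts as the zero map and $g\in G\subseteq M$ acts as the scalar $g$; morphisms are $M$-equivariant morphisms of $\mathrm{Vect}_{\hat G}$. Subrepresentations are $M$-stable subspaces; a representation is simple if it is nonzero and has no subrepresentations besides $\{0\}$ and itself. $\mathrm{Ann}_M(V)=\{x\in M: xV=0\}$. For $a\in M$, $J(a)=MaM$; $a,b$ are $\mathcal J$-equivalent if $J(a)=J(b)$, with class $\mathcal J_a$. A $\mathcal J$-class is regular if it contains an idempotent. $I(a)=\{x\in J(a): MxM\neq J(a)\}$, and the principal factor $P(a)$ is $(J(a)\setminus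 I(a))\cup\{0\}$ with product $xy$ if $xy\in J(a)\setminus I(a)$ and $0$ otherwise. $M$ acts on $P(e)$ ($e$ idempotent) by left translation: $m\cdot x=mx$ if $mx\in J(e)\setminus I(e)$, else $0$. $M$ is left inductive if for every idempotent $e$, $P(e)$ with this left translation action is an object of $\mathrm{Rep}(M,\hat G)$. For a $\mathcal J$-class $J$, $I_J=\{x\in M: J\not\subseteq MxM\}$; a regular $\mathcal J$-class $J$ is the apex of $V\in\mathrm{Rep}(M,\hat G)$ if $\mathrm{Ann}_M(V)=I_J$. For an idempotent $e$ with $J=\mathcal J_e$, $G_J=eMe\cap J$ is a group with identity $e$, and $\hat G_J=G_J\sqcup\{0\}$. $\mathrm{Rep}(\hat G_J,\hat G)$ consists of objects $W$ of $\mathrm{Vect}_{\hat G}$ with an action of $\hat G_J$ by morphisms of $\mathrm{Vect}_{\hat G}$, $e$ acting as identity, $0$ as zero, and $ge$ ($g\in G$) acting as the scalar $g$. $P(e)e=\{xe: x\in P(e)\}$ (products in $P(e)$), stable under left translation by $M$ and right multiplication by $G_J$. For $W\in\mathrm{Rep}(\hat G_J,\hat G)$, induction is $W{\uparrow_e}=P(e)e\otimes_{\hat G_J}W$: the set of pairs $x\otimes w$ ($x\in P(e)e$, $w\in W$) modulo the equivalence relation generated by $x\alpha\otimes w=x\otimes\alpha w$ for $\alpha\in\hat G_J$, $gx\otimes w=x\otimes gw$ for $g\in G$, and $x\otimes 0=0\otimes w=0$, with $M$ acting by $a(x\otimes w)=(ax)\otimes w$. Restriction is $V{\downarrow_e}=eV$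 with the induced action of $\hat G_J$. *)

theory Defs
  imports Main
begin

text \<open>A hat-G-linear monoid: carrier, product, unit, absorbing zero and the
  subgroup G of central units (G is given as a subset of M).\<close>
record 'm lmonoid =
  mcar :: "'m set"
  mmul :: "'m \<Rightarrow> 'm \<Rightarrow> 'm"
  mone :: 'm
  mzer :: 'm
  mgrp :: "'m set"

text \<open>A pointed finite set with an action (by elements of M, resp. of the group G
  or of hat G_J).  For objects of Vect_Ghat only the action of G is used.\<close>
record ('m, 'v) obj =
  rcar :: "'v set"
  rzero :: 'v
  ract :: "'m \<Rightarrow> 'v \<Rightarrow> 'v"

definition Glinear_monoid :: "'m lmonoid \<Rightarrow> bool" where
  "Glinear_monoid M \<longleftrightarrow>
     finite (mcar M) \<and> mone M \<in> mcar M \<and> mzer M \<in> mcar M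
   \<and> (\<forall>x\<in>mcar M. \<forall>y\<in>mcar M. mmul M x y \<in> mcar M)
   \<and> (\<forall>x\<in>mcar M. \<forall>y\<in>mcar M. \<forall>z\<in>mcar M. mmul M (mmul M x y) z = mmul M x (mmul M y z))
   \<and> (\<forall>x\<in>mcar M. mmul M (mone M) x = x \<and> mmul M x (mone M) = x)
   \<and> (\<forall>x\<in>mcar M. mmul M (mzer M) x = mzer M \<and> mmul M x (mzer M) = mzer M)
   \<and> mgrp M \<subseteq> mcar M \<and> mone M \<in> mgrp M
   \<and> (\<forall>g\<in>mgrp M. \<forall>h\<in>mgrp M. mmul M g h \<in> mgrp M)
   \<and> (\<forall>g\<in>mgrp M. \<exists>h\<in>mgrp M. mmul M g h = mone M \<and> mmul M h g = mone M)
   \<and> (\<forall>g\<in>mgrp M. \<forall>x\<in>mcar M. mmul M g x = mmul M x g)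
   \<and> (\<forall>g\<in>mgrp M. \<forall>x\<in>mcar M. x \<noteq> mzer M \<and> mmul M g x = x \<longrightarrow> g = mone M)"

definition vect_obj :: "'m lmonoid \<Rightarrow> ('m, 'v) obj \<Rightarrow> bool" where
  "vect_obj M V \<longleftrightarrow>
     finite (rcar V) \<and> rzero V \<in> rcar V
   \<and> (\<forall>g\<in>mgrp M. \<forall>v\<in>rcar V. ract V g v \<in> rcar V)
   \<and> (\<forall>v\<in>rcar V. ract V (mone M) v = v)
   \<and> (\<forall>g\<in>mgrp M. \<forall>h\<in>mgrp M. \<forall>v\<in>rcar V. ract V (mmul M g h) v = ract V g (ract V h v))
   \<and> (\<forall>g\<in>mgrp M. ract V g (rzero V) = rzero V)
   \<and> (\<forall>g\<in>mgrp M. \<forall>v\<in>rcar V. v \<noteq> rzero V \<and> ract V g v = v \<longrightarrow> g = mone M)"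

definition orbit :: "'m lmonoid \<Rightarrow> ('m, 'v) obj \<Rightarrow> 'v \<Rightarrow> 'v set" where
  "orbit M V v = (\<lambda>g. ract V g v) ` mgrp M"

definition vect_morph :: "'m lmonoid \<Rightarrow> ('m, 'v) obj \<Rightarrow> ('m, 'w) obj \<Rightarrow> ('v \<Rightarrow> 'w) \<Rightarrow> bool" where
  "vect_morph M V W f \<longleftrightarrow>
     (\<forall>v\<in>rcar V. f v \<in> rcar W) \<and> f (rzero V) = rzero W
   \<and> (\<forall>g\<in>mgrp M. \<forall>v\<in>rcar V. f (ract V g v) = ract W g (f v))
   \<and> (\<forall>v1\<in>rcar V. \<forall>v2\<in>rcar V. f v1 = f v2 \<and> f v1 \<noteq> rzero W \<longrightarrow> orbit M V v1 = orbit M V v2)"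

text \<open>The scalar action of g in G is the action of g as element of M
  (this encodes "g in G acts as the scalar g").\<close>
definition rep_M :: "'m lmonoid \<Rightarrow> ('m, 'v) obj \<Rightarrow> bool" where
  "rep_M M V \<longleftrightarrow>
     vect_obj M V
   \<and> (\<forall>m\<in>mcar M. vect_morph M V V (ract V m))
   \<and> (\<forall>m\<in>mcar M. \<forall>n\<in>mcar M. \<forall>v\<in>rcar V. ract V (mmul M m n) v = ract V m (ract V n v))
   \<and> (\<forall>v\<in>rcar V. ract V (mone M) v = v)
   \<and> (\<forall>v\<in>rcar V. ract V (mzer M) v = rzero V)"

definition morph_M :: "'m lmonoid \<Rightarrow> ('m, 'v) obj \<Rightarrow> ('m, 'w) obj \<Rightarrow> ('v \<Rightarrow> 'w) \<Rightarrow> bool" where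
  "morph_M M V W f \<longleftrightarrow> vect_morph M V W f
     \<and> (\<forall>m\<in>mcar M. \<forall>v\<in>rcar V. f (ract V m v) = ract W m (f v))"

definition iso_M :: "'m lmonoid \<Rightarrow> ('m, 'v) obj \<Rightarrow> ('m, 'w) obj \<Rightarrow> bool" where
  "iso_M M V W \<longleftrightarrow> (\<exists>f g. morph_M M V W f \<and> morph_M M W V g
     \<and> (\<forall>v\<in>rcar V. g (f v) = v) \<and> (\<forall>w\<in>rcar W. f (g w) = w))"

definition subrep_M :: "'m lmonoid \<Rightarrow> ('m, 'v) obj \<Rightarrow> 'v set \<Rightarrow> bool" where
  "subrep_M M V S \<longleftrightarrow> S \<subseteq> rcar V \<and> rzero V \<in> S
     \<and> (\<forall>g\<in>mgrp M. \<forall>v\<in>S. ract V g v \<in> S)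
     \<and> (\<forall>m\<in>mcar M. \<forall>v\<in>S. ract V m v \<in> S)"

definition simple_M :: "'m lmonoid \<Rightarrow> ('m, 'v) obj \<Rightarrow> bool" where
  "simple_M M V \<longleftrightarrow> rep_M M V \<and> rcar V \<noteq> {rzero V}
     \<and> (\<forall>S. subrep_M M V S \<longrightarrow> S = {rzero V} \<or> S = rcar V)"

definition Ann :: "'m lmonoid \<Rightarrow> ('m, 'v) obj \<Rightarrow> 'm set" where
  "Ann M V = {x\<in>mcar M. \<forall>v\<in>rcar V. ract V x v = rzero V}"

definition Jideal :: "'m lmonoid \<Rightarrow> 'm \<Rightarrow> 'm set" where
  "Jideal M a = {mmul M (mmul M x a) y | x y. x \<in> mcar M \<and> y \<in> mcar M}"

definition Jclass :: "'m lmonoid \<Rightarrow> 'm \<Rightarrow> 'm set" where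
  "Jclass M a = {x\<in>mcar M. Jideal M x = Jideal M a}"

definition Iideal :: "'m lmonoid \<Rightarrow> 'm \<Rightarrow> 'm set" where
  "Iideal M a = {x\<in>Jideal M a. Jideal M x \<noteq> Jideal M a}"

definition idem :: "'m lmonoid \<Rightarrow> 'm \<Rightarrow> bool" where
  "idem M e \<longleftrightarrow> e \<in> mcar M \<and> mmul M e e = e"

definition is_Jclass :: "'m lmonoid \<Rightarrow> 'm set \<Rightarrow> bool" where
  "is_Jclass M J \<longleftrightarrow> (\<exists>a\<in>mcar M. J = Jclass M a)"

definition regular_Jclass :: "'m lmonoid \<Rightarrow> 'm set \<Rightarrow> bool" where
  "regular_Jclass M J \<longleftrightarrow> is_Jclass M J \<and> (\<exists>e\<in>J. idem M e)"

definition IJ :: "'m lmonoid \<Rightarrow> 'm set \<Rightarrow> 'm set" where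
  "IJ M J = {x\<in>mcar M. \<not> J \<subseteq> Jideal M x}"

definition has_apex :: "'m lmonoid \<Rightarrow> ('m, 'v) obj \<Rightarrow> 'm set \<Rightarrow> bool" where
  "has_apex M V J \<longleftrightarrow> regular_Jclass M J \<and> Ann M V = IJ M J"

definition pmul :: "'m lmonoid \<Rightarrow> 'm \<Rightarrow> 'm \<Rightarrow> 'm \<Rightarrow> 'm" where
  "pmul M a x y = (if mmul M x y \<in> Jideal M a - Iideal M a then mmul M x y else mzer M)"

definition Pobj :: "'m lmonoid \<Rightarrow> 'm \<Rightarrow> ('m, 'm) obj" where
  "Pobj M e = \<lparr>rcar = (Jideal M e - Iideal M e) \<union> {mzer M}, rzero = mzer M,
               ract = (\<lambda>m x. pmul M e m x)\<rparr>"

definition left_inductive :: "'m lmonoid \<Rightarrow> bool" where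
  "left_inductive M \<longleftrightarrow> (\<forall>e. idem M e \<longrightarrow> rep_M M (Pobj M e))"

definition GJ :: "'m lmonoid \<Rightarrow> 'm \<Rightarrow> 'm set" where
  "GJ M e = {mmul M (mmul M e m) e | m. m \<in> mcar M} \<inter> Jclass M e"

definition hatGJ :: "'m lmonoid \<Rightarrow> 'm \<Rightarrow> 'm set" where
  "hatGJ M e = GJ M e \<union> {mzer M}"

text \<open>The underlying object of Vect_Ghat: g in G acts as g e.\<close>
definition scal :: "'m lmonoid \<Rightarrow> 'm \<Rightarrow> ('m, 'v) obj \<Rightarrow> ('m, 'v) obj" where
  "scal M e W = W\<lparr>ract := (\<lambda>g. ract W (mmul M g e))\<rparr>"

definition rep_GJ :: "'m lmonoid \<Rightarrow> 'm \<Rightarrow> ('m, 'v) obj \<Rightarrow> bool" where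
  "rep_GJ M e W \<longleftrightarrow>
     vect_obj M (scal M e W)
   \<and> (\<forall>a\<in>hatGJ M e. vect_morph M (scal M e W) (scal M e W) (ract W a))
   \<and> (\<forall>a\<in>hatGJ M e. \<forall>b\<in>hatGJ M e. \<forall>w\<in>rcar W. ract W (mmul M a b) w = ract W a (ract W b w))
   \<and> (\<forall>w\<in>rcar W. ract W e w = w)
   \<and> (\<forall>w\<in>rcar W. ract W (mzer M) w = rzero W)"

definition morph_GJ :: "'m lmonoid \<Rightarrow> 'm \<Rightarrow> ('m, 'v) obj \<Rightarrow> ('m, 'w) obj \<Rightarrow> ('v \<Rightarrow> 'w) \<Rightarrow> bool" where
  "morph_GJ M e V W f \<longleftrightarrow> vect_morph M (scal M e V) (scal M e W) f
     \<and> (\<forall>a\<in>hatGJ M e. \<forall>v\<in>rcar V. f (ract V a v) = ract W a (f v))"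

definition iso_GJ :: "'m lmonoid \<Rightarrow> 'm \<Rightarrow> ('m, 'v) obj \<Rightarrow> ('m, 'w) obj \<Rightarrow> bool" where
  "iso_GJ M e V W \<longleftrightarrow> (\<exists>f g. morph_GJ M e V W f \<and> morph_GJ M e W V g
     \<and> (\<forall>v\<in>rcar V. g (f v) = v) \<and> (\<forall>w\<in>rcar W. f (g w) = w))"

definition subrep_GJ :: "'m lmonoid \<Rightarrow> 'm \<Rightarrow> ('m, 'v) obj \<Rightarrow> 'v set \<Rightarrow> bool" where
  "subrep_GJ M e W S \<longleftrightarrow> S \<subseteq> rcar W \<and> rzero W \<in> S
     \<and> (\<forall>g\<in>mgrp M. \<forall>w\<in>S. ract (scal M e W) g w \<in> S)
     \<and> (\<forall>a\<in>hatGJ M e. \<forall>w\<in>S. ract W a w \<in> S)"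

definition simple_GJ :: "'m lmonoid \<Rightarrow> 'm \<Rightarrow> ('m, 'v) obj \<Rightarrow> bool" where
  "simple_GJ M e W \<longleftrightarrow> rep_GJ M e W \<and> rcar W \<noteq> {rzero W}
     \<and> (\<forall>S. subrep_GJ M e W S \<longrightarrow> S = {rzero W} \<or> S = rcar W)"

definition PeE :: "'m lmonoid \<Rightarrow> 'm \<Rightarrow> 'm set" where
  "PeE M e = (\<lambda>x. pmul M e x e) ` rcar (Pobj M e)"

text \<open>Generating relation for the tensor product P(e)e \<otimes>_{hat G_J} W.\<close>
definition ind_gen :: "'m lmonoid \<Rightarrow> 'm \<Rightarrow> ('m, 'w) obj \<Rightarrow> (('m \<times> 'w) \<times> ('m \<times> 'w)) set" where
  "ind_gen M e W =
     {((pmul M e x a, w), (x, ract W a w)) | x a w. x \<in> PeE M e \<and> a \<in> hatGJ M e \<and> w \<in> rcar W}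
   \<union> {((mmul M g x, w), (x, ract W (mmul M g e) w)) | x g w. x \<in> PeE M e \<and> g \<in> mgrp M \<and> w \<in> rcar W}
   \<union> {((x, rzero W), (mzer M, w)) | x w. x \<in> PeE M e \<and> w \<in> rcar W}"

definition ind_rel :: "'m lmonoid \<Rightarrow> 'm \<Rightarrow> ('m, 'w) obj \<Rightarrow> (('m \<times> 'w) \<times> ('m \<times> 'w)) set" where
  "ind_rel M e W = (ind_gen M e W \<union> (ind_gen M e W)\<inverse>)\<^sup>* \<inter> ((PeE M e \<times> rcar W) \<times> (PeE M e \<times> rcar W))"

text \<open>W induced up: classes x \<otimes> w, with a (x \<otimes> w) = (a x) \<otimes> w.\<close>
definition ind :: "'m lmonoid \<Rightarrow> 'm \<Rightarrow> ('m, 'w) obj \<Rightarrow> ('m, ('m \<times> 'w) set) obj" where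
  "ind M e W = \<lparr>rcar = (PeE M e \<times> rcar W) // ind_rel M e W,
                rzero = ind_rel M e W `` {(mzer M, rzero W)},
                ract = (\<lambda>a C. ind_rel M e W `` ((\<lambda>(x, w). (pmul M e a x, w)) ` C))\<rparr>"

definition res :: "'m lmonoid \<Rightarrow> 'm \<Rightarrow> ('m, 'v) obj \<Rightarrow> ('m, 'v) obj" where
  "res M e V = \<lparr>rcar = ract V e ` rcar V, rzero = rzero V, ract = ract V\<rparr>"

definition quot :: "('m, 'v) obj \<Rightarrow> 'v set \<Rightarrow> ('m, 'v) obj" where
  "quot V S = \<lparr>rcar = (rcar V - S) \<union> {rzero V}, rzero = rzero V,
               ract = (\<lambda>m v. if ract V m v \<in> S then rzero V else ract V m v)\<rparr>"

definition Nset :: "'m lmonoid \<Rightarrow> 'm \<Rightarrow> ('m, 'v) obj \<Rightarrow> 'v set" where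
  "Nset M e V = {c\<in>rcar V. \<forall>m\<in>mcar M. ract V (mmul M e m) c = rzero V}"

definition Qrep :: "'m lmonoid \<Rightarrow> 'm \<Rightarrow> ('m, 'w) obj \<Rightarrow> ('m, ('m \<times> 'w) set) obj" where
  "Qrep M e W = quot (ind M e W) (Nset M e (ind M e W))"

end

theory Submission
  imports Defs
begin

text \<open>Let \<open>L = {x \<in> J. x e = x}\<close>, so that \<open>P(e)e = L \<union> {0}\<close>. Stability of the finite monoid \<open>M\<close>
  makes \<open>G\<^sub>J\<close> a group acting freely on \<open>L\<close> from the right, and the tensor product
  \<open>P(e)e \<otimes> W\<close> has an explicit description: \<open>x \<otimes> w = y \<otimes> v \<noteq> 0\<close> iff \<open>y = x a\<close>, \<open>w = a v\<close>
  for some \<open>a \<in> G\<^sub>J\<close>. Left inductivity says that left translation on \<open>P(e)\<close> identifies only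
  elements of one \<open>G\<close>-orbit, which makes \<open>W\<up>\<^sub>e\<close> an object of \<open>Rep(M, G)\<close>.

  The vectors \<open>e \<otimes> w\<close> generate \<open>W\<up>\<^sub>e\<close> and avoid \<open>N\<close>; a subrepresentation not contained in \<open>N\<close>
  contains some \<open>e \<otimes> w \<noteq> 0\<close>, hence all of them when \<open>W\<close> is simple. So \<open>N\<close> is the unique
  maximal subrepresentation, and \<open>w \<mapsto> e \<otimes> w\<close> identifies \<open>W\<close> with \<open>e Q(W)\<close>. Conversely, for
  \<open>V\<close> simple with apex \<open>J\<close> and \<open>W \<cong> eV\<close>, the map \<open>x \<otimes> w \<mapsto> x w\<close> kills \<open>N\<close> and induces
  \<open>Q(W) \<cong> V\<close>: surjectivity comes from \<open>V\<close> being cyclic, injectivity once more from left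
  inductivity and the freeness of the \<open>G\<close>-action. Applied to \<open>W = eV\<close> and to \<open>W \<cong> e Q(W')\<close>
  this gives part (2) and the bijection.\<close>

lemma Image_equiv_class_image:
  assumes eq: "equiv A r" and f: "\<And>p q. (p, q) \<in> r \<Longrightarrow> (f p, f q) \<in> r" and p: "p \<in> A"
  shows "r `` (f ` (r `` {p})) = r `` {f p}"
proof
  show "r `` (f ` (r `` {p})) \<subseteq> r `` {f p}"
    using f eq unfolding equiv_def trans_def by blast
  show "r `` {f p} \<subseteq> r `` (f ` (r `` {p}))"
    using eq p unfolding equiv_def refl_on_def by blast
qed

section \<open>Stability of finite monoids\<close>

locale linear_monoid =
  fixes M :: "'m lmonoid"
  assumes Glinear: "Glinear_monoid M"
begin

abbreviation Mc where "Mc \<equiv> mcar M"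
abbreviation mzero (\<open>\<zero>\<close>) where "\<zero> \<equiv> mzer M"
abbreviation munit (\<open>\<one>\<close>) where "\<one> \<equiv> mone M"
abbreviation G where "G \<equiv> mgrp M"
abbreviation mult (infixl \<open>\<cdot>\<close> 70) where "x \<cdot> y \<equiv> mmul M x y"

lemma finite_Mc: "finite Mc"
  and unit_closed [simp]: "\<one> \<in> Mc"
  and zero_closed [simp]: "\<zero> \<in> Mc"
  and mult_closed [simp]: "x \<in> Mc \<Longrightarrow> y \<in> Mc \<Longrightarrow> x \<cdot> y \<in> Mc"
  and mult_assoc: "x \<in> Mc \<Longrightarrow> y \<in> Mc \<Longrightarrow> w \<in> Mc \<Longrightarrow> x \<cdot> y \<cdot> w = x \<cdot> (y \<cdot> w)"
  and unit_left [simp]: "x \<in> Mc \<Longrightarrow> \<one> \<cdot> x = x"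
  and unit_right [simp]: "x \<in> Mc \<Longrightarrow> x \<cdot> \<one> = x"
  and zero_left [simp]: "x \<in> Mc \<Longrightarrow> \<zero> \<cdot> x = \<zero>"
  and zero_right [simp]: "x \<in> Mc \<Longrightarrow> x \<cdot> \<zero> = \<zero>"
  and G_closed: "g \<in> G \<Longrightarrow> g \<in> Mc"
  and unit_in_G [simp]: "\<one> \<in> G"
  and G_mult_closed: "g \<in> G \<Longrightarrow> h \<in> G \<Longrightarrow> g \<cdot> h \<in> G"
  and G_central: "g \<in> G \<Longrightarrow> x \<in> Mc \<Longrightarrow> g \<cdot> x = x \<cdot> g"
  using Glinear unfolding Glinear_monoid_def by blast+

lemma G_inverse:
  assumes "g \<in> G" obtains h where "h \<in> G" "g \<cdot> h = \<one>" "h \<cdot> g = \<one>"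
  using Glinear assms unfolding Glinear_monoid_def by blast

lemma Jideal_iff: "x \<in> Jideal M a \<longleftrightarrow> (\<exists>p\<in>Mc. \<exists>q\<in>Mc. x = p \<cdot> a \<cdot> q)"
  unfolding Jideal_def by blast

lemma Jideal_self: "a \<in> Mc \<Longrightarrow> a \<in> Jideal M a"
  unfolding Jideal_iff by (rule bexI[of _ \<one>], rule bexI[of _ \<one>]) auto

lemma Jideal_closed: "a \<in> Mc \<Longrightarrow> x \<in> Jideal M a \<Longrightarrow> x \<in> Mc"
  unfolding Jideal_iff by auto

lemma Jideal_trans:
  assumes a: "a \<in> Mc" and x: "x \<in> Jideal M a" and y: "y \<in> Jideal M x"
  shows "y \<in> Jideal M a"
proof -
  obtain p q where pq: "p \<in> Mc" "q \<in> Mc" "x = p \<cdot> a \<cdot> q" using x unfolding Jideal_iff by blast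
  obtain r s where rs: "r \<in> Mc" "s \<in> Mc" "y = r \<cdot> x \<cdot> s" using y unfolding Jideal_iff by blast
  have "y = (r \<cdot> p) \<cdot> a \<cdot> (q \<cdot> s)" using pq rs a by (simp add: mult_assoc)
  then show ?thesis unfolding Jideal_iff using pq rs mult_closed by blast
qed

lemma Jideal_mult: "p \<in> Mc \<Longrightarrow> a \<in> Mc \<Longrightarrow> q \<in> Mc \<Longrightarrow> p \<cdot> a \<cdot> q \<in> Jideal M a"
  unfolding Jideal_iff by blast

lemma Jideal_mult_left: "p \<in> Mc \<Longrightarrow> a \<in> Mc \<Longrightarrow> p \<cdot> a \<in> Jideal M a"
  using Jideal_mult[of p a \<one>] by simp

lemma Jideal_mult_right: "q \<in> Mc \<Longrightarrow> a \<in> Mc \<Longrightarrow> a \<cdot> q \<in> Jideal M a"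
  using Jideal_mult[of \<one> a q] by simp

definition mpow :: "'m \<Rightarrow> nat \<Rightarrow> 'm" where
  "mpow x n = (mmul M x ^^ n) \<one>"

lemma mpow_0 [simp]: "mpow x 0 = \<one>"
  unfolding mpow_def by simp

lemma mpow_Suc: "mpow x (Suc n) = x \<cdot> mpow x n"
  unfolding mpow_def by simp

lemma mpow_closed [simp]: "x \<in> Mc \<Longrightarrow> mpow x n \<in> Mc"
  by (induction n) (auto simp: mpow_Suc)

lemma mpow_add: "x \<in> Mc \<Longrightarrow> mpow x (a + b) = mpow x a \<cdot> mpow x b"
  by (induction a) (auto simp: mpow_Suc mult_assoc)

lemma mpow_Suc_right: "x \<in> Mc \<Longrightarrow> mpow x (Suc n) = mpow x n \<cdot> x"
  using mpow_add[of x n 1] by (simp add: mpow_Suc)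

text \<open>The powers of \<open>x\<close> are eventually periodic; a multiple of the period that exceeds
  the preperiod gives an idempotent power.\<close>

lemma mpow_idempotent:
  assumes x: "x \<in> Mc" shows "\<exists>n\<ge>1. mpow x n \<cdot> mpow x n = mpow x n"
proof -
  have "\<not> inj (mpow x)"
  proof
    assume "inj (mpow x)"
    moreover have "range (mpow x) \<subseteq> Mc" using x by auto
    ultimately show False using finite_Mc finite_subset inj_on_finite by blast
  qed
  then obtain i j where ij: "i < j" "mpow x i = mpow x j"
    unfolding inj_def by (metis linorder_neqE_nat)
  define p where "p = j - i"
  have p: "p \<ge> 1" "j = i + p" using ij unfolding p_def by auto
  have period: "mpow x (i + k + p) = mpow x (i + k)" for k
  proof -
    have "mpow x (i + k + p) = mpow x (j + k)" using p by (simp add: algebra_simps)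
    also have "\<dots> = mpow x i \<cdot> mpow x k" using x ij mpow_add by simp
    also have "\<dots> = mpow x (i + k)" using x mpow_add by simp
    finally show ?thesis .
  qed
  have periods: "mpow x (i + k + q * p) = mpow x (i + k)" for k q
  proof (induction q)
    case (Suc q)
    have "mpow x (i + k + Suc q * p) = mpow x (i + (k + q * p) + p)" by (simp add: algebra_simps)
    also have "\<dots> = mpow x (i + (k + q * p))" by (rule period)
    also have "\<dots> = mpow x (i + k)" using Suc by (simp add: algebra_simps)
    finally show ?case .
  qed simp
  define n where "n = (i + 1) * p"
  have n: "n \<ge> 1" "n \<ge> i" unfolding n_def using p(1) by (simp_all add: trans_le_add2)
  have "mpow x n \<cdot> mpow x n = mpow x (i + (n - i) + (i + 1) * p)"
    using mpow_add x n unfolding n_def by (metis le_add_diff_inverse)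
  also have "\<dots> = mpow x (i + (n - i))" by (rule periods)
  also have "\<dots> = mpow x n" using n by simp
  finally show ?thesis using n by blast
qed

text \<open>Iterating
  \<open>a = (sb) a t\<close> gives \<open>a = y\<^sup>n a t\<^sup>n\<close> with \<open>y = sb\<close>; for \<open>y\<^sup>n\<close> idempotent this yields
  \<open>a = y\<^sup>n a\<close>, which exhibits \<open>a\<close> as a left multiple of \<open>ba\<close>.\<close>

lemma stable_left:
  assumes C: "a \<in> Mc" "b \<in> Mc" "s \<in> Mc" "t \<in> Mc" and eq: "a = s \<cdot> (b \<cdot> a) \<cdot> t"
  shows "\<exists>u\<in>Mc. a = u \<cdot> (b \<cdot> a)"
proof -
  define y where "y = s \<cdot> b"
  have y: "y \<in> Mc" using C y_def by simp
  have iter: "a = mpow y n \<cdot> a \<cdot> mpow t n" for n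
  proof (induction n)
    case (Suc n)
    have "a = mpow y n \<cdot> (y \<cdot> a \<cdot> t) \<cdot> mpow t n"
      using Suc eq C unfolding y_def by (simp add: mult_assoc)
    also have "\<dots> = (mpow y n \<cdot> y) \<cdot> a \<cdot> (t \<cdot> mpow t n)" using C y by (simp add: mult_assoc)
    also have "\<dots> = mpow y (Suc n) \<cdot> a \<cdot> mpow t (Suc n)"
      using C y mpow_Suc_right[of y n] mpow_Suc[of t n] by simp
    finally show ?case .
  qed (use C in simp)
  obtain n where n: "n \<ge> 1" "mpow y n \<cdot> mpow y n = mpow y n" using mpow_idempotent y by blast
  have "a = mpow y n \<cdot> (mpow y n \<cdot> a \<cdot> mpow t n)" using iter[of n] n C y by (metis mult_assoc mpow_closed mult_closed)
  then have a: "a = mpow y n \<cdot> a" using iter by metis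
  obtain m where m: "n = Suc m" using n by (cases n) auto
  have "a = (mpow y m \<cdot> s) \<cdot> (b \<cdot> a)" using a C y unfolding m by (simp add: mpow_Suc_right mult_assoc y_def)
  then show ?thesis using C y by (intro bexI[of _ "mpow y m \<cdot> s"]) auto
qed

lemma stable_right:
  assumes C: "a \<in> Mc" "b \<in> Mc" "s \<in> Mc" "t \<in> Mc" and eq: "a = s \<cdot> (a \<cdot> b) \<cdot> t"
  shows "\<exists>v\<in>Mc. a = (a \<cdot> b) \<cdot> v"
proof -
  define y where "y = b \<cdot> t"
  have y: "y \<in> Mc" using C y_def by simp
  have iter: "a = mpow s n \<cdot> a \<cdot> mpow y n" for n
  proof (induction n)
    case (Suc n)
    have "a = mpow s n \<cdot> (s \<cdot> a \<cdot> y) \<cdot> mpow y n"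
      using Suc eq C unfolding y_def by (simp add: mult_assoc)
    also have "\<dots> = (mpow s n \<cdot> s) \<cdot> a \<cdot> (y \<cdot> mpow y n)" using C y by (simp add: mult_assoc)
    also have "\<dots> = mpow s (Suc n) \<cdot> a \<cdot> mpow y (Suc n)"
      using C y mpow_Suc_right[of s n] mpow_Suc[of y n] by simp
    finally show ?case .
  qed (use C in simp)
  obtain n where n: "n \<ge> 1" "mpow y n \<cdot> mpow y n = mpow y n" using mpow_idempotent y by blast
  have "a = (mpow s n \<cdot> a \<cdot> mpow y n) \<cdot> mpow y n" using iter[of n] n C y by (metis mult_assoc mpow_closed mult_closed)
  then have a: "a = a \<cdot> mpow y n" using iter by metis
  obtain m where m: "n = Suc m" using n by (cases n) auto
  have "a = (a \<cdot> b) \<cdot> (t \<cdot> mpow y m)" using a C y unfolding m by (simp add: mpow_Suc mult_assoc y_def)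
  then show ?thesis using C y by (intro bexI[of _ "t \<cdot> mpow y m"]) auto
qed

section \<open>Representations\<close>

lemma
  assumes "vect_obj M V"
  shows vect_obj_finite: "finite (rcar V)"
    and vect_obj_zero_in: "rzero V \<in> rcar V"
    and vect_obj_mult: "g \<in> G \<Longrightarrow> h \<in> G \<Longrightarrow> v \<in> rcar V \<Longrightarrow> ract V (g \<cdot> h) v = ract V g (ract V h v)"
    and vect_obj_free: "g \<in> G \<Longrightarrow> v \<in> rcar V \<Longrightarrow> v \<noteq> rzero V \<Longrightarrow> ract V g v = v \<Longrightarrow> g = \<one>"
  using assms unfolding vect_obj_def by blast+

lemma vect_objI:
  assumes "finite (rcar V)" "rzero V \<in> rcar V"
    and "\<And>g v. g \<in> G \<Longrightarrow> v \<in> rcar V \<Longrightarrow> ract V g v \<in> rcar V"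
    and "\<And>v. v \<in> rcar V \<Longrightarrow> ract V \<one> v = v"
    and "\<And>g h v. g \<in> G \<Longrightarrow> h \<in> G \<Longrightarrow> v \<in> rcar V \<Longrightarrow> ract V (g \<cdot> h) v = ract V g (ract V h v)"
    and "\<And>g. g \<in> G \<Longrightarrow> ract V g (rzero V) = rzero V"
    and "\<And>g v. g \<in> G \<Longrightarrow> v \<in> rcar V \<Longrightarrow> v \<noteq> rzero V \<Longrightarrow> ract V g v = v \<Longrightarrow> g = \<one>"
  shows "vect_obj M V"
  using assms unfolding vect_obj_def by blast

lemma vect_morphI:
  assumes "\<And>v. v \<in> rcar V \<Longrightarrow> f v \<in> rcar W" and "f (rzero V) = rzero W"
    and "\<And>g v. g \<in> G \<Longrightarrow> v \<in> rcar V \<Longrightarrow> f (ract V g v) = ract W g (f v)"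
    and "inj_on f (rcar V)"
  shows "vect_morph M V W f"
  using assms unfolding vect_morph_def inj_on_def by blast

lemma
  assumes "vect_morph M V W f"
  shows vect_morph_closed: "v \<in> rcar V \<Longrightarrow> f v \<in> rcar W"
    and vect_morph_zero: "f (rzero V) = rzero W"
    and vect_morph_orbit: "v1 \<in> rcar V \<Longrightarrow> v2 \<in> rcar V \<Longrightarrow> f v1 = f v2 \<Longrightarrow> f v1 \<noteq> rzero W \<Longrightarrow>
      orbit M V v1 = orbit M V v2"
  using assms unfolding vect_morph_def by blast+

lemma
  assumes "rep_M M V"
  shows rep_M_vect_obj: "vect_obj M V"
    and rep_M_vect_morph: "m \<in> Mc \<Longrightarrow> vect_morph M V V (ract V m)"
    and rep_M_mult: "m \<in> Mc \<Longrightarrow> n \<in> Mc \<Longrightarrow> v \<in> rcar V \<Longrightarrow> ract V (m \<cdot> n) v = ract V m (ract V n v)"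
    and rep_M_unit: "v \<in> rcar V \<Longrightarrow> ract V \<one> v = v"
    and rep_M_mzero: "v \<in> rcar V \<Longrightarrow> ract V \<zero> v = rzero V"
  using assms unfolding rep_M_def by simp_all

lemma rep_M_closed: "rep_M M V \<Longrightarrow> m \<in> Mc \<Longrightarrow> v \<in> rcar V \<Longrightarrow> ract V m v \<in> rcar V"
  by (erule vect_morph_closed[OF rep_M_vect_morph])

lemma rep_M_zero_fixed: "rep_M M V \<Longrightarrow> m \<in> Mc \<Longrightarrow> ract V m (rzero V) = rzero V"
  by (erule vect_morph_zero[OF rep_M_vect_morph])

lemma rep_M_orbit:
  "rep_M M V \<Longrightarrow> m \<in> Mc \<Longrightarrow> v1 \<in> rcar V \<Longrightarrow> v2 \<in> rcar V \<Longrightarrow> ract V m v1 = ract V m v2 \<Longrightarrow>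
    ract V m v1 \<noteq> rzero V \<Longrightarrow> orbit M V v1 = orbit M V v2"
  by (erule vect_morph_orbit[OF rep_M_vect_morph])

lemma
  assumes "rep_M M V"
  shows rep_M_zero_in: "rzero V \<in> rcar V"
    and rep_M_finite: "finite (rcar V)"
    and rep_M_free: "g \<in> G \<Longrightarrow> v \<in> rcar V \<Longrightarrow> v \<noteq> rzero V \<Longrightarrow> ract V g v = v \<Longrightarrow> g = \<one>"
  by (rule vect_obj_zero_in[OF rep_M_vect_obj[OF assms]],
      rule vect_obj_finite[OF rep_M_vect_obj[OF assms]],
      rule vect_obj_free[OF rep_M_vect_obj[OF assms]])

lemma rep_MI:
  assumes "vect_obj M V"
    and "\<And>m. m \<in> Mc \<Longrightarrow> vect_morph M V V (ract V m)"
    and "\<And>m n v. m \<in> Mc \<Longrightarrow> n \<in> Mc \<Longrightarrow> v \<in> rcar V \<Longrightarrow> ract V (m \<cdot> n) v = ract V m (ract V n v)"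
    and "\<And>v. v \<in> rcar V \<Longrightarrow> ract V \<one> v = v"
    and "\<And>v. v \<in> rcar V \<Longrightarrow> ract V \<zero> v = rzero V"
  shows "rep_M M V"
  using assms unfolding rep_M_def by blast

lemma action_G_commute:
  assumes act: "\<And>m n v. m \<in> Mc \<Longrightarrow> n \<in> Mc \<Longrightarrow> v \<in> A \<Longrightarrow> f (m \<cdot> n) v = f m (f n v)"
    and "m \<in> Mc" "g \<in> G" "v \<in> A"
  shows "f m (f g v) = f g (f m v)"
  using act[of m g v] act[of g m v] G_central[of g m] G_closed assms(2-) by simp

lemma orbit_shift:
  assumes V: "vect_obj M V" and v: "v \<in> rcar V" and g: "g \<in> G"
  shows "orbit M V (ract V g v) = orbit M V v"
proof
  show "orbit M V (ract V g v) \<subseteq> orbit M V v"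
  proof
    fix y assume "y \<in> orbit M V (ract V g v)"
    then obtain h where h: "h \<in> G" "y = ract V h (ract V g v)" unfolding orbit_def by blast
    then have "y = ract V (h \<cdot> g) v" using vect_obj_mult[OF V h(1) g v] by simp
    then show "y \<in> orbit M V v" unfolding orbit_def using G_mult_closed[OF h(1) g] by blast
  qed
  show "orbit M V v \<subseteq> orbit M V (ract V g v)"
  proof
    fix y assume "y \<in> orbit M V v"
    then obtain k where k: "k \<in> G" "y = ract V k v" unfolding orbit_def by blast
    obtain h where h: "h \<in> G" "h \<cdot> g = \<one>" using G_inverse[OF g] by blast
    have "k \<cdot> h \<cdot> g = k" using h k g G_closed by (simp add: mult_assoc)
    then have "y = ract V (k \<cdot> h) (ract V g v)"
      using k vect_obj_mult[OF V G_mult_closed[OF k(1) h(1)] g v] by simp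
    then show "y \<in> orbit M V (ract V g v)" unfolding orbit_def using G_mult_closed[OF k(1) h(1)] by blast
  qed
qed

lemma
  assumes "subrep_M M V S"
  shows subrep_M_subset: "S \<subseteq> rcar V"
    and subrep_M_zero: "rzero V \<in> S"
    and subrep_M_closed: "m \<in> Mc \<Longrightarrow> v \<in> S \<Longrightarrow> ract V m v \<in> S"
  using assms unfolding subrep_M_def by blast+

lemma subrep_MI:
  assumes "S \<subseteq> rcar V" "rzero V \<in> S" "\<And>m v. m \<in> Mc \<Longrightarrow> v \<in> S \<Longrightarrow> ract V m v \<in> S"
  shows "subrep_M M V S"
  using assms G_closed unfolding subrep_M_def by blast

lemma
  assumes "simple_M M V"
  shows simple_M_rep: "rep_M M V"
    and simple_M_subrep: "subrep_M M V S \<Longrightarrow> S = {rzero V} \<or> S = rcar V"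
  using assms unfolding simple_M_def by blast+

lemma simple_M_cyclic:
  assumes sV: "simple_M M V" and v: "v \<in> rcar V" "v \<noteq> rzero V" and u: "u \<in> rcar V"
  shows "\<exists>m\<in>Mc. u = ract V m v"
proof -
  note V = simple_M_rep[OF sV]
  define S where "S = (\<lambda>m. ract V m v) ` Mc"
  have "subrep_M M V S"
  proof (rule subrep_MI)
    show "S \<subseteq> rcar V" unfolding S_def using rep_M_closed[OF V _ v(1)] by auto
    show "rzero V \<in> S" unfolding S_def using rep_M_mzero[OF V v(1)] by (auto intro: image_eqI[of _ _ \<zero>])
    show "ract V n s \<in> S" if n: "n \<in> Mc" and s: "s \<in> S" for n s
    proof -
      obtain m where m: "m \<in> Mc" "s = ract V m v" using s S_def by blast
      then have "ract V n s = ract V (n \<cdot> m) v" using rep_M_mult[OF V n m(1) v(1)] by simp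
      then show ?thesis unfolding S_def using n m by auto
    qed
  qed
  moreover have "v \<in> S" unfolding S_def using rep_M_unit[OF V v(1)] by (auto intro: image_eqI[of _ _ \<one>])
  ultimately have "S = rcar V" using simple_M_subrep[OF sV] v by blast
  then show ?thesis using u S_def by auto
qed

lemma Nset_subrep:
  assumes V: "rep_M M V" and a: "a \<in> Mc"
  shows "subrep_M M V (Nset M a V)"
proof (rule subrep_MI)
  show "rzero V \<in> Nset M a V" unfolding Nset_def using rep_M_zero_in[OF V] rep_M_zero_fixed[OF V] a by simp
  show "ract V m c \<in> Nset M a V" if m: "m \<in> Mc" and c: "c \<in> Nset M a V" for m c
  proof -
    have cV: "c \<in> rcar V" using c unfolding Nset_def by simp
    have "ract V (a \<cdot> n) (ract V m c) = ract V (a \<cdot> (n \<cdot> m)) c" if "n \<in> Mc" for n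
      using rep_M_mult[OF V _ m cV, of "a \<cdot> n"] that m a by (simp add: mult_assoc)
    then show ?thesis using c m rep_M_closed[OF V m cV] unfolding Nset_def by simp
  qed
qed (auto simp: Nset_def)

lemma quot_simps [simp]:
  "rcar (quot V S) = (rcar V - S) \<union> {rzero V}"
  "rzero (quot V S) = rzero V"
  "ract (quot V S) m v = (if ract V m v \<in> S then rzero V else ract V m v)"
  unfolding quot_def by simp_all

lemma quot_act_mult:
  assumes V: "rep_M M V" and S: "subrep_M M V S"
    and m: "m \<in> Mc" and n: "n \<in> Mc" and v: "v \<in> rcar V"
  shows "ract (quot V S) (m \<cdot> n) v = ract (quot V S) m (ract (quot V S) n v)"
proof (cases "ract V n v \<in> S")
  case True
  then have "ract V (m \<cdot> n) v \<in> S" using rep_M_mult[OF V m n v] subrep_M_closed[OF S m] by simp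
  then show ?thesis using True rep_M_zero_fixed[OF V m] subrep_M_zero[OF S] by simp
qed (use rep_M_mult[OF V m n v] in simp)

lemma subrep_M_complement_G_stable:
  assumes V: "rep_M M V" and S: "subrep_M M V S"
    and g: "g \<in> G" and v: "v \<in> rcar V" "v \<notin> S"
  shows "ract V g v \<notin> S"
proof
  assume gv: "ract V g v \<in> S"
  obtain h where h: "h \<in> G" "h \<cdot> g = \<one>" using G_inverse[OF g] by blast
  have "ract V h (ract V g v) = v" using rep_M_mult[OF V G_closed[OF h(1)] G_closed[OF g] v(1)] h rep_M_unit[OF V v(1)] by simp
  then show False using subrep_M_closed[OF S G_closed[OF h(1)] gv] v by simp
qed

lemma quot_vect_obj:
  assumes V: "rep_M M V" and S: "subrep_M M V S"
  shows "vect_obj M (quot V S)"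
proof (rule vect_objI)
  let ?Q = "quot V S"
  have QV: "rcar ?Q \<subseteq> rcar V" using rep_M_zero_in[OF V] by auto
  show "finite (rcar ?Q)" using rep_M_finite[OF V] by simp
  show "ract ?Q g v \<in> rcar ?Q" if "g \<in> G" "v \<in> rcar ?Q" for g v
    using rep_M_closed[OF V G_closed[OF that(1)]] that QV by auto
  show "ract ?Q (g \<cdot> h) v = ract ?Q g (ract ?Q h v)" if "g \<in> G" "h \<in> G" "v \<in> rcar ?Q" for g h v
    using quot_act_mult[OF V S G_closed[OF that(1)] G_closed[OF that(2)]] that QV by blast
  show "g = \<one>" if "g \<in> G" "v \<in> rcar ?Q" "v \<noteq> rzero ?Q" "ract ?Q g v = v" for g v
    using that subrep_M_complement_G_stable[OF V S] rep_M_free[OF V] by (auto split: if_splits)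
qed (use rep_M_unit[OF V] rep_M_zero_fixed[OF V] G_closed subrep_M_zero[OF S] in auto)

lemma quot_vect_morph:
  assumes V: "rep_M M V" and S: "subrep_M M V S" and m: "m \<in> Mc"
  shows "vect_morph M (quot V S) (quot V S) (ract (quot V S) m)"
  unfolding vect_morph_def
proof (intro conjI ballI impI)
  let ?Q = "quot V S"
  have QV: "rcar ?Q \<subseteq> rcar V" using rep_M_zero_in[OF V] by auto
  show "ract ?Q m v \<in> rcar ?Q" if "v \<in> rcar ?Q" for v
    using rep_M_closed[OF V m] that QV by auto
  show "ract ?Q m (rzero ?Q) = rzero ?Q" using rep_M_zero_fixed[OF V m] by simp
  show "ract ?Q m (ract ?Q g v) = ract ?Q g (ract ?Q m v)" if "g \<in> G" "v \<in> rcar ?Q" for g v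
    using action_G_commute[where f = "ract ?Q", OF quot_act_mult[OF V S] m that(1)] that(2) QV by blast
  show "orbit M ?Q v1 = orbit M ?Q v2"
    if v: "v1 \<in> rcar ?Q" "v2 \<in> rcar ?Q" and eq: "ract ?Q m v1 = ract ?Q m v2 \<and> ract ?Q m v1 \<noteq> rzero ?Q" for v1 v2
  proof -
    have mv: "ract V m v1 \<notin> S" "ract V m v2 \<notin> S" using eq by (auto split: if_splits)
    then have vS: "v1 \<notin> S" "v2 \<notin> S" using subrep_M_closed[OF S m] by blast+
    have vV: "v1 \<in> rcar V" "v2 \<in> rcar V" using v QV by blast+
    have "ract V m v1 = ract V m v2" "ract V m v1 \<noteq> rzero V"
      using eq mv subrep_M_zero[OF S] by auto
    then have "orbit M V v1 = orbit M V v2" using rep_M_orbit[OF V m vV] by blast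
    moreover have "orbit M ?Q v = orbit M V v" if "v \<in> rcar V" "v \<notin> S" for v
      unfolding orbit_def using subrep_M_complement_G_stable[OF V S _ that] by simp
    ultimately show ?thesis using vV vS by simp
  qed
qed

lemma quot_rep:
  assumes V: "rep_M M V" and S: "subrep_M M V S"
  shows "rep_M M (quot V S)"
proof (rule rep_MI)
  let ?Q = "quot V S"
  have QV: "rcar ?Q \<subseteq> rcar V" using rep_M_zero_in[OF V] by auto
  show "vect_obj M ?Q" using quot_vect_obj[OF V S] .
  show "vect_morph M ?Q ?Q (ract ?Q m)" if "m \<in> Mc" for m using quot_vect_morph[OF V S that] .
  show "ract ?Q (m \<cdot> n) v = ract ?Q m (ract ?Q n v)" if "m \<in> Mc" "n \<in> Mc" "v \<in> rcar ?Q" for m n v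
    using quot_act_mult[OF V S that(1,2)] that(3) QV by blast
  show "ract ?Q \<one> v = v" if "v \<in> rcar ?Q" for v
    using that rep_M_unit[OF V] subrep_M_zero[OF S] rep_M_zero_in[OF V] by auto
  show "ract ?Q \<zero> v = rzero ?Q" if "v \<in> rcar ?Q" for v
    using that rep_M_mzero[OF V] subrep_M_zero[OF S] rep_M_zero_in[OF V] by auto
qed

lemma iso_M_bij:
  assumes V: "rep_M M V" and f: "morph_M M V W f" and b: "bij_betw f (rcar V) (rcar W)"
  shows "iso_M M V W"
proof -
  define g where "g = inv_into (rcar V) f"
  have fa: "f (ract V m v) = ract W m (f v)" if "m \<in> Mc" "v \<in> rcar V" for m v
    using f that unfolding morph_M_def by blast
  have gW: "g w \<in> rcar V" and fg: "f (g w) = w" if "w \<in> rcar W" for w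
    using that b unfolding g_def by (metis bij_betw_def inv_into_into, metis bij_betw_def f_inv_into_f)
  have gf: "g (f v) = v" if "v \<in> rcar V" for v
    using that b unfolding g_def by (simp add: bij_betw_def)
  have ga: "g (ract W m w) = ract V m (g w)" if "m \<in> Mc" "w \<in> rcar W" for m w
    using gf[OF rep_M_closed[OF V that(1) gW[OF that(2)]]] fa[OF that(1) gW[OF that(2)]] fg[OF that(2)] by simp
  have "vect_morph M W V g"
  proof (rule vect_morphI)
    have "f (rzero V) = rzero W" using f unfolding morph_M_def vect_morph_def by blast
    then show "g (rzero W) = rzero V" using gf[OF rep_M_zero_in[OF V]] by simp
    show "inj_on g (rcar W)" using fg by (metis inj_onI)
  qed (use gW ga G_closed in auto)
  then have "morph_M M W V g" unfolding morph_M_def using ga by blast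
  then show ?thesis unfolding iso_M_def using f gf fg by blast
qed

lemma quot_subrep_union:
  assumes V: "rep_M M V" and N: "subrep_M M V N" and S: "subrep_M M (quot V N) S"
  shows "subrep_M M V (S \<union> N)"
proof (rule subrep_MI)
  show "S \<union> N \<subseteq> rcar V" using subrep_M_subset[OF S] subrep_M_subset[OF N] rep_M_zero_in[OF V] by auto
  show "rzero V \<in> S \<union> N" using subrep_M_zero[OF N] by simp
  show "ract V m c \<in> S \<union> N" if m: "m \<in> Mc" and c: "c \<in> S \<union> N" for m c
  proof (cases "c \<in> N")
    case True then show ?thesis using subrep_M_closed[OF N m] by simp
  next
    case False
    then have "ract (quot V N) m c \<in> S" using subrep_M_closed[OF S m] c by simp
    then show ?thesis by (auto split: if_splits)
  qed
qed

end

section \<open>The \<open>\<J>\<close>-class of \<open>e\<close> and the group \<open>G\<^sub>J\<close>\<close>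

locale principal_idempotent = linear_monoid M for M :: "'m lmonoid" +
  fixes e :: 'm
  assumes left_inductive: "left_inductive M"
    and idem: "idem M e"
    and e_nonzero: "e \<noteq> mzer M"
begin

lemma e_closed [simp]: "e \<in> Mc" and e_idem [simp]: "e \<cdot> e = e"
  using idem unfolding idem_def by blast+

lemma e_idem_left [simp]: "x \<in> Mc \<Longrightarrow> e \<cdot> (e \<cdot> x) = e \<cdot> x"
  by (simp flip: mult_assoc)

definition J :: "'m set" where
  "J = Jclass M e"

lemma J_iff: "x \<in> J \<longleftrightarrow> x \<in> Mc \<and> x \<in> Jideal M e \<and> e \<in> Jideal M x"
proof
  assume "x \<in> J"
  then have "x \<in> Mc" "Jideal M x = Jideal M e" unfolding J_def Jclass_def by auto
  then show "x \<in> Mc \<and> x \<in> Jideal M e \<and> e \<in> Jideal M x" using Jideal_self by auto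
next
  assume x: "x \<in> Mc \<and> x \<in> Jideal M e \<and> e \<in> Jideal M x"
  then have "Jideal M x = Jideal M e" using Jideal_trans Jideal_closed by (meson e_closed subsetI subset_antisym)
  then show "x \<in> J" using x unfolding J_def Jclass_def by auto
qed

lemma J_closed: "x \<in> J \<Longrightarrow> x \<in> Mc"
  using J_iff by blast

lemma e_in_J [simp]: "e \<in> J"
  using J_iff Jideal_self by auto

lemma zero_notin_J [simp]: "\<zero> \<notin> J"
proof
  assume "\<zero> \<in> J"
  then have "e \<in> Jideal M \<zero>" using J_iff by auto
  then show False using e_nonzero unfolding Jideal_iff by auto
qed

lemma Jideal_minus_Iideal: "Jideal M e - Iideal M e = J"
proof (intro set_eqI iffI)
  fix x assume "x \<in> Jideal M e - Iideal M e"
  then show "x \<in> J" unfolding Iideal_def J_def Jclass_def using Jideal_closed[of e x] by auto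
next
  fix x assume "x \<in> J"
  then have "x \<in> Mc" "Jideal M x = Jideal M e" unfolding J_def Jclass_def by auto
  then show "x \<in> Jideal M e - Iideal M e" unfolding Iideal_def using Jideal_self[of x] by auto
qed

lemma pmul_eq: "pmul M e x y = (if x \<cdot> y \<in> J then x \<cdot> y else \<zero>)"
  unfolding pmul_def Jideal_minus_Iideal by simp

lemma J_right_factor: "x \<in> Mc \<Longrightarrow> y \<in> Mc \<Longrightarrow> x \<cdot> y \<in> J \<Longrightarrow> e \<in> Jideal M y"
  by (meson J_iff Jideal_mult_left Jideal_trans)

lemma J_left_factor: "x \<in> Mc \<Longrightarrow> y \<in> Mc \<Longrightarrow> x \<cdot> y \<in> J \<Longrightarrow> e \<in> Jideal M x"
  by (meson J_iff Jideal_mult_right Jideal_trans)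

lemma J_mult_leftI: "x \<in> Mc \<Longrightarrow> y \<in> J \<Longrightarrow> e \<in> Jideal M (x \<cdot> y) \<Longrightarrow> x \<cdot> y \<in> J"
  by (meson J_iff Jideal_mult_left Jideal_trans mult_closed e_closed)

lemma J_mult_rightI: "x \<in> J \<Longrightarrow> y \<in> Mc \<Longrightarrow> e \<in> Jideal M (x \<cdot> y) \<Longrightarrow> x \<cdot> y \<in> J"
  by (meson J_iff Jideal_mult_right Jideal_trans mult_closed e_closed)

lemma notin_J_below: "b \<in> Mc \<Longrightarrow> b \<in> Jideal M e \<Longrightarrow> b \<notin> J \<Longrightarrow> e \<notin> Jideal M b"
  using J_iff by blast

lemma IJ_iff: "x \<in> IJ M J \<longleftrightarrow> x \<in> Mc \<and> e \<notin> Jideal M x"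
proof -
  have "J \<subseteq> Jideal M x \<longleftrightarrow> e \<in> Jideal M x" if "x \<in> Mc" for x
    using J_iff Jideal_trans that e_in_J by blast
  then show ?thesis unfolding IJ_def by auto
qed

lemma regular_J: "regular_Jclass M J"
  unfolding regular_Jclass_def is_Jclass_def using idem e_in_J unfolding J_def by auto

lemma J_left_unit:
  assumes "x \<in> J" "x \<cdot> e = x" shows "\<exists>u\<in>Mc. u \<cdot> x = e"
proof -
  obtain p q where pq: "p \<in> Mc" "q \<in> Mc" "e = p \<cdot> x \<cdot> q" using assms J_iff Jideal_iff by blast
  then have "e = p \<cdot> (x \<cdot> e) \<cdot> q" using assms by simp
  from stable_left[OF e_closed J_closed[OF assms(1)] pq(1,2) this] assms show ?thesis by auto
qed

lemma J_right_unit: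
  assumes "x \<in> J" "e \<cdot> x = x" shows "\<exists>v\<in>Mc. x \<cdot> v = e"
proof -
  obtain p q where pq: "p \<in> Mc" "q \<in> Mc" "e = p \<cdot> x \<cdot> q" using assms J_iff Jideal_iff by blast
  then have "e = p \<cdot> (e \<cdot> x) \<cdot> q" using assms by simp
  from stable_right[OF e_closed J_closed[OF assms(1)] pq(1,2) this] assms show ?thesis by auto
qed

lemma GJ_iff: "a \<in> GJ M e \<longleftrightarrow> a \<in> J \<and> e \<cdot> a = a \<and> a \<cdot> e = a"
proof
  assume "a \<in> GJ M e"
  then obtain m where "m \<in> Mc" "a = e \<cdot> m \<cdot> e" "a \<in> J" unfolding GJ_def J_def by blast
  then show "a \<in> J \<and> e \<cdot> a = a \<and> a \<cdot> e = a" by (metis mult_assoc mult_closed e_closed e_idem)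
next
  assume a: "a \<in> J \<and> e \<cdot> a = a \<and> a \<cdot> e = a"
  then have "a = e \<cdot> a \<cdot> e" "a \<in> Mc" using J_closed by auto
  then show "a \<in> GJ M e" using a unfolding GJ_def J_def by blast
qed

lemma
  assumes "a \<in> GJ M e"
  shows GJ_closed: "a \<in> Mc" and GJ_in_J: "a \<in> J"
    and GJ_e_left: "e \<cdot> a = a" and GJ_e_right: "a \<cdot> e = a"
  using assms GJ_iff J_closed by blast+

lemma e_in_GJ [simp]: "e \<in> GJ M e"
  using GJ_iff by simp

text \<open>\<open>G\<^sub>J\<close> is a group: the one-sided units provided by stability glue to a
  two-sided inverse \<open>e u e\<close>.\<close>

lemma GJ_inverse:
  assumes a: "a \<in> GJ M e" obtains b where "b \<in> GJ M e" "a \<cdot> b = e" "b \<cdot> a = e"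
proof -
  note aC = GJ_closed[OF a]
  obtain u where u: "u \<in> Mc" "u \<cdot> a = e" using J_left_unit a GJ_iff by blast
  obtain v where v: "v \<in> Mc" "a \<cdot> v = e" using J_right_unit a GJ_iff by blast
  have ue: "u \<cdot> e = e \<cdot> v"
    using u v aC by (metis mult_assoc)
  define b where "b = e \<cdot> u \<cdot> e"
  have bC: "b \<in> Mc" using u b_def by simp
  have ba: "b \<cdot> a = e" unfolding b_def using u aC GJ_e_left[OF a] by (simp add: mult_assoc)
  have "a \<cdot> b = (a \<cdot> e) \<cdot> (u \<cdot> e)" unfolding b_def using u aC by (simp add: mult_assoc)
  also have "\<dots> = a \<cdot> (e \<cdot> v)" using GJ_e_right[OF a] ue by simp
  also have "\<dots> = e" using GJ_e_right[OF a] v aC by (simp flip: mult_assoc)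
  finally have ab: "a \<cdot> b = e" .
  have "b \<in> Jideal M e" unfolding b_def using Jideal_mult[of \<one> e "u \<cdot> e"] u by (simp add: mult_assoc)
  moreover have "e \<in> Jideal M b" using Jideal_mult[of \<one> b a] bC aC ba by simp
  moreover have "e \<cdot> b = b" "b \<cdot> e = b" unfolding b_def using u by (simp_all add: mult_assoc)
  ultimately have "b \<in> GJ M e" using GJ_iff J_iff bC by auto
  then show ?thesis using that ab ba by blast
qed

lemma GJ_mult_closed:
  assumes a: "a \<in> GJ M e" and b: "b \<in> GJ M e" shows "a \<cdot> b \<in> GJ M e"
proof -
  note C = GJ_closed[OF a] GJ_closed[OF b]
  obtain c where c: "c \<in> GJ M e" "b \<cdot> c = e" using GJ_inverse b by blast
  have "a = a \<cdot> b \<cdot> c" using c C GJ_closed[OF c(1)] GJ_e_right[OF a] by (simp add: mult_assoc)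
  then have "a \<in> Jideal M (a \<cdot> b)" using Jideal_mult[of \<one> "a \<cdot> b" c] C GJ_closed[OF c(1)] by simp
  then have "e \<in> Jideal M (a \<cdot> b)" using GJ_in_J[OF a] J_iff Jideal_trans C by (meson mult_closed)
  then have "a \<cdot> b \<in> J" using J_mult_rightI GJ_in_J[OF a] C by blast
  moreover have "e \<cdot> (a \<cdot> b) = a \<cdot> b" using GJ_e_left[OF a] C by (simp flip: mult_assoc)
  moreover have "a \<cdot> b \<cdot> e = a \<cdot> b" using GJ_e_right[OF b] C by (simp add: mult_assoc)
  ultimately show ?thesis using GJ_iff by simp
qed

lemma G_mult_J:
  assumes g: "g \<in> G" and x: "x \<in> J" shows "g \<cdot> x \<in> J"
proof -
  obtain h where h: "h \<in> G" "h \<cdot> g = \<one>" using G_inverse g by blast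
  have C: "g \<in> Mc" "h \<in> Mc" "x \<in> Mc" using g h G_closed J_closed x by auto
  then have "x = h \<cdot> (g \<cdot> x)" using h by (simp flip: mult_assoc)
  then have "x \<in> Jideal M (g \<cdot> x)" using Jideal_mult_left[of h "g \<cdot> x"] C by simp
  then have "e \<in> Jideal M (g \<cdot> x)" using x J_iff Jideal_trans C by (meson mult_closed)
  then show ?thesis using J_mult_leftI C x by blast
qed

lemma G_e_in_GJ:
  assumes g: "g \<in> G" shows "g \<cdot> e \<in> GJ M e"
proof -
  have gC: "g \<in> Mc" using g G_closed by auto
  have "e \<cdot> (g \<cdot> e) = g \<cdot> e"
    using G_central[OF g e_closed] gC by (metis mult_assoc e_closed e_idem)
  moreover have "g \<cdot> e \<cdot> e = g \<cdot> e" using gC by (simp add: mult_assoc)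
  ultimately show ?thesis using GJ_iff G_mult_J[OF g e_in_J] by simp
qed

lemma hatGJ_iff: "a \<in> hatGJ M e \<longleftrightarrow> a \<in> GJ M e \<or> a = \<zero>"
  unfolding hatGJ_def by auto

lemma GJ_in_hatGJ: "a \<in> GJ M e \<Longrightarrow> a \<in> hatGJ M e"
  by (simp add: hatGJ_iff)

lemma hatGJ_props: "a \<in> hatGJ M e \<Longrightarrow> a \<in> Mc \<and> e \<cdot> a = a \<and> a \<cdot> e = a"
  using hatGJ_iff GJ_closed GJ_e_left GJ_e_right by auto

definition L :: "'m set" where
  "L = {x \<in> J. x \<cdot> e = x}"

lemma L_closed: "x \<in> L \<Longrightarrow> x \<in> Mc"
  unfolding L_def using J_closed by auto

lemma L_nonzero: "x \<in> L \<Longrightarrow> x \<noteq> \<zero>"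
  unfolding L_def by auto

lemma GJ_subset_L: "a \<in> GJ M e \<Longrightarrow> a \<in> L"
  unfolding L_def GJ_iff by auto

lemma e_in_L [simp]: "e \<in> L"
  by (simp add: GJ_subset_L)

lemma carrier_Pobj: "rcar (Pobj M e) = insert \<zero> J"
  unfolding Pobj_def using Jideal_minus_Iideal by auto

lemma PeE_eq: "PeE M e = insert \<zero> L"
proof -
  have "PeE M e = (\<lambda>x. pmul M e x e) ` insert \<zero> J" unfolding PeE_def carrier_Pobj by simp
  also have "\<dots> = insert \<zero> L"
  proof (intro set_eqI iffI)
    fix y assume "y \<in> (\<lambda>x. pmul M e x e) ` insert \<zero> J"
    then show "y \<in> insert \<zero> L" unfolding pmul_eq L_def using J_closed by (auto simp: mult_assoc)
  next
    fix y assume "y \<in> insert \<zero> L"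
    then show "y \<in> (\<lambda>x. pmul M e x e) ` insert \<zero> J"
      unfolding L_def by (auto simp: pmul_eq intro: image_eqI[of _ _ y])
  qed
  finally show ?thesis .
qed

lemma zero_in_PeE [simp]: "\<zero> \<in> PeE M e"
  and L_subset_PeE: "x \<in> L \<Longrightarrow> x \<in> PeE M e"
  and PeE_nonzero: "x \<in> PeE M e \<Longrightarrow> x \<noteq> \<zero> \<Longrightarrow> x \<in> L"
  and PeE_closed: "x \<in> PeE M e \<Longrightarrow> x \<in> Mc"
  unfolding PeE_eq using L_closed by auto

lemma L_mult_GJ:
  assumes x: "x \<in> L" and a: "a \<in> GJ M e" shows "x \<cdot> a \<in> L"
proof -
  note C = L_closed[OF x] GJ_closed[OF a]
  obtain b where b: "b \<in> GJ M e" "a \<cdot> b = e" using GJ_inverse a by blast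
  have "x = x \<cdot> a \<cdot> b" using x b C GJ_closed[OF b(1)] unfolding L_def by (simp add: mult_assoc)
  then have "x \<in> Jideal M (x \<cdot> a)" using Jideal_mult[of \<one> "x \<cdot> a" b] C GJ_closed[OF b(1)] by simp
  moreover have xJ: "x \<in> J" using x unfolding L_def by blast
  ultimately have "e \<in> Jideal M (x \<cdot> a)" using J_iff Jideal_trans[of "x \<cdot> a" x e] C by simp
  then have "x \<cdot> a \<in> J" using J_mult_rightI C xJ by blast
  moreover have "x \<cdot> a \<cdot> e = x \<cdot> a" using C GJ_e_right[OF a] by (simp add: mult_assoc)
  ultimately show ?thesis unfolding L_def by blast
qed

lemma G_mult_L: "x \<in> L \<Longrightarrow> g \<in> G \<Longrightarrow> g \<cdot> x \<in> L"
  using G_mult_J G_closed unfolding L_def by (auto simp: mult_assoc J_closed)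

lemma L_mult_closed: "m \<in> Mc \<Longrightarrow> x \<in> L \<Longrightarrow> m \<cdot> x \<in> J \<Longrightarrow> m \<cdot> x \<in> L"
  unfolding L_def by (auto simp: mult_assoc J_closed)

lemma L_mult_G_e:
  assumes x: "x \<in> L" and g: "g \<in> G" shows "x \<cdot> (g \<cdot> e) = g \<cdot> x"
proof -
  have "x \<cdot> (g \<cdot> e) = g \<cdot> x \<cdot> e" using G_central[OF g L_closed[OF x]] G_closed[OF g] L_closed[OF x]
    by (simp flip: mult_assoc)
  also have "\<dots> = g \<cdot> x" using x G_closed[OF g] L_closed[OF x] unfolding L_def by (simp add: mult_assoc)
  finally show ?thesis .
qed

lemma mult_L_GJ_in_J_iff:
  assumes m: "m \<in> Mc" and x: "x \<in> L" and a: "a \<in> GJ M e"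
  shows "m \<cdot> (x \<cdot> a) \<in> J \<longleftrightarrow> m \<cdot> x \<in> J"
proof
  note C = L_closed[OF x] GJ_closed[OF a]
  assume "m \<cdot> (x \<cdot> a) \<in> J"
  then have "m \<cdot> (x \<cdot> a) \<in> L" using L_mult_closed[OF m L_mult_GJ[OF x a]] by simp
  moreover obtain b where b: "b \<in> GJ M e" "a \<cdot> b = e" using GJ_inverse a by blast
  ultimately have "m \<cdot> (x \<cdot> a) \<cdot> b \<in> L" using L_mult_GJ by simp
  moreover have "m \<cdot> (x \<cdot> a) \<cdot> b = m \<cdot> x" using b C m GJ_closed x unfolding L_def by (simp add: mult_assoc)
  ultimately show "m \<cdot> x \<in> J" unfolding L_def by simp
next
  assume "m \<cdot> x \<in> J"
  then show "m \<cdot> (x \<cdot> a) \<in> J"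
    using L_mult_GJ[OF L_mult_closed[OF m x] a] L_closed[OF x] GJ_closed[OF a] m unfolding L_def
    by (simp add: mult_assoc)
qed

abbreviation actP (infixr \<open>\<triangleright>\<close> 75) where "m \<triangleright> x \<equiv> pmul M e m x"

lemma actP_zero [simp]: "m \<in> Mc \<Longrightarrow> m \<triangleright> \<zero> = \<zero>"
  by (simp add: pmul_eq)

lemma actP_nonzeroD: "m \<triangleright> x \<noteq> \<zero> \<Longrightarrow> m \<triangleright> x = m \<cdot> x \<and> m \<cdot> x \<in> J"
  by (simp add: pmul_eq split: if_splits)

lemma L_actP_e: "x \<in> L \<Longrightarrow> x \<triangleright> e = x"
  unfolding L_def by (simp add: pmul_eq)

lemma actP_closed: "m \<in> Mc \<Longrightarrow> x \<in> PeE M e \<Longrightarrow> m \<triangleright> x \<in> PeE M e"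
  unfolding PeE_eq pmul_eq using L_mult_closed by auto

lemma actP_unit: "x \<in> PeE M e \<Longrightarrow> \<one> \<triangleright> x = x"
  and actP_mzero: "x \<in> PeE M e \<Longrightarrow> \<zero> \<triangleright> x = \<zero>"
  unfolding PeE_eq L_def pmul_eq by (auto simp: J_closed)

lemma actP_mult:
  assumes m: "m \<in> Mc" and n: "n \<in> Mc" and x: "x \<in> PeE M e"
  shows "(m \<cdot> n) \<triangleright> x = m \<triangleright> (n \<triangleright> x)"
proof (cases "x = \<zero>")
  case False
  then have xC: "x \<in> Mc" "x \<in> J" using x PeE_nonzero L_closed L_def by auto
  show ?thesis
  proof (cases "n \<cdot> x \<in> J")
    case False
    have "m \<cdot> (n \<cdot> x) \<notin> J"
    proof
      assume "m \<cdot> (n \<cdot> x) \<in> J"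
      then have "e \<in> Jideal M (n \<cdot> x)" using J_right_factor m n xC by simp
      moreover have "n \<cdot> x \<in> Jideal M e" using xC n J_iff Jideal_mult_left Jideal_trans by (meson mult_closed e_closed)
      ultimately show False using False J_iff n xC by simp
    qed
    then show ?thesis using False m n xC by (simp add: pmul_eq mult_assoc)
  qed (use m n xC in \<open>simp add: pmul_eq mult_assoc\<close>)
qed (use m n in simp)

text \<open>This is where left inductivity enters: left translation on \<open>P(e)\<close> is a morphism of
  \<open>Vect\<^sub>G\<close>, so it only identifies elements of the same \<open>G\<close>-orbit.\<close>

lemma actP_eq_imp_G_orbit:
  assumes m: "m \<in> Mc" and x: "x \<in> PeE M e" and y: "y \<in> PeE M e"
    and eq: "m \<triangleright> x = m \<triangleright> y" and nz: "m \<triangleright> x \<noteq> \<zero>"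
  obtains g where "g \<in> G" "y = g \<cdot> x"
proof -
  have P: "rep_M M (Pobj M e)" using left_inductive idem unfolding left_inductive_def by blast
  have xy: "x \<in> rcar (Pobj M e)" "y \<in> rcar (Pobj M e)" using x y unfolding carrier_Pobj PeE_eq L_def by auto
  have "orbit M (Pobj M e) x = orbit M (Pobj M e) y"
    using rep_M_orbit[OF P m xy] eq nz by (simp add: Pobj_def)
  moreover have "y \<in> orbit M (Pobj M e) y"
    unfolding orbit_def Pobj_def using actP_unit[OF y] by (auto intro: image_eqI[of _ _ \<one>])
  ultimately obtain g where g: "g \<in> G" "y = g \<triangleright> x" unfolding orbit_def Pobj_def by auto
  have "x \<noteq> \<zero>" using nz m by auto
  then have "g \<cdot> x \<in> J" using G_mult_J g x PeE_nonzero L_def by auto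
  then show ?thesis using g that by (simp add: pmul_eq)
qed

lemma scal_simps [simp]:
  "rcar (scal M e W) = rcar W" "rzero (scal M e W) = rzero W" "ract (scal M e W) g = ract W (g \<cdot> e)"
  unfolding scal_def by simp_all

lemma
  assumes "rep_GJ M e W"
  shows rep_GJ_vect_obj: "vect_obj M (scal M e W)"
    and rep_GJ_vect_morph: "a \<in> hatGJ M e \<Longrightarrow> vect_morph M (scal M e W) (scal M e W) (ract W a)"
    and rep_GJ_mult: "a \<in> hatGJ M e \<Longrightarrow> b \<in> hatGJ M e \<Longrightarrow> w \<in> rcar W \<Longrightarrow>
      ract W (a \<cdot> b) w = ract W a (ract W b w)"
    and rep_GJ_e: "w \<in> rcar W \<Longrightarrow> ract W e w = w"
    and rep_GJ_mzero: "w \<in> rcar W \<Longrightarrow> ract W \<zero> w = rzero W"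
  using assms unfolding rep_GJ_def by simp_all

lemma rep_GJ_zero_in: "rep_GJ M e W \<Longrightarrow> rzero W \<in> rcar W"
  using vect_obj_zero_in[OF rep_GJ_vect_obj] by simp

lemma rep_GJ_finite: "rep_GJ M e W \<Longrightarrow> finite (rcar W)"
  using vect_obj_finite[OF rep_GJ_vect_obj] by simp

lemma rep_GJ_free:
  "rep_GJ M e W \<Longrightarrow> g \<in> G \<Longrightarrow> w \<in> rcar W \<Longrightarrow> w \<noteq> rzero W \<Longrightarrow> ract W (g \<cdot> e) w = w \<Longrightarrow> g = \<one>"
  using vect_obj_free[OF rep_GJ_vect_obj] by simp

lemma rep_GJ_closed: "rep_GJ M e W \<Longrightarrow> a \<in> hatGJ M e \<Longrightarrow> w \<in> rcar W \<Longrightarrow> ract W a w \<in> rcar W"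
  using vect_morph_closed[OF rep_GJ_vect_morph] by simp

lemma rep_GJ_zero_fixed: "rep_GJ M e W \<Longrightarrow> a \<in> hatGJ M e \<Longrightarrow> ract W a (rzero W) = rzero W"
  using vect_morph_zero[OF rep_GJ_vect_morph] by simp

lemma rep_GJ_inverse:
  assumes W: "rep_GJ M e W" and a: "a \<in> GJ M e" and b: "b \<in> GJ M e" "b \<cdot> a = e" and w: "w \<in> rcar W"
  shows "ract W b (ract W a w) = w"
  using rep_GJ_mult[OF W GJ_in_hatGJ[OF b(1)] GJ_in_hatGJ[OF a] w] b rep_GJ_e[OF W w] by simp

lemma rep_GJ_nonzero:
  assumes W: "rep_GJ M e W" and a: "a \<in> GJ M e" and w: "w \<in> rcar W" "w \<noteq> rzero W"
  shows "ract W a w \<noteq> rzero W"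
proof
  assume "ract W a w = rzero W"
  moreover obtain b where "b \<in> GJ M e" "b \<cdot> a = e" using GJ_inverse a by blast
  ultimately show False
    using rep_GJ_inverse[OF W a _ _ w(1)] rep_GJ_zero_fixed[OF W GJ_in_hatGJ] w(2) by metis
qed

lemma
  assumes "simple_GJ M e W"
  shows simple_GJ_rep: "rep_GJ M e W"
    and simple_GJ_subrep: "subrep_GJ M e W S \<Longrightarrow> S = {rzero W} \<or> S = rcar W"
  using assms unfolding simple_GJ_def by simp_all

lemma simple_GJ_nonzero:
  assumes "simple_GJ M e W" obtains w where "w \<in> rcar W" "w \<noteq> rzero W"
  using assms rep_GJ_zero_in[OF simple_GJ_rep[OF assms]] unfolding simple_GJ_def by blast

section \<open>Induction\<close>

text \<open>Explicit description of the tensor product \<open>P(e)e \<otimes>\<^bsub>G\<^sub>J\<^esub> W\<close>: two pure tensors agree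
  iff both vanish, or \<open>y = x a\<close> and \<open>w = a v\<close> for some \<open>a \<in> G\<^sub>J\<close>.\<close>

definition tensor_rel :: "('m, 'w) obj \<Rightarrow> (('m \<times> 'w) \<times> ('m \<times> 'w)) set" where
  "tensor_rel W = {((x, w), (y, v)). x \<in> PeE M e \<and> y \<in> PeE M e \<and> w \<in> rcar W \<and> v \<in> rcar W \<and>
     (((x = \<zero> \<or> w = rzero W) \<and> (y = \<zero> \<or> v = rzero W)) \<or>
      (x \<noteq> \<zero> \<and> w \<noteq> rzero W \<and> y \<noteq> \<zero> \<and> v \<noteq> rzero W \<and> (\<exists>a\<in>GJ M e. y = x \<cdot> a \<and> w = ract W a v)))}"

lemma tensor_rel_dom:
  "((x, w), (y, v)) \<in> tensor_rel W \<Longrightarrow> x \<in> PeE M e \<and> y \<in> PeE M e \<and> w \<in> rcar W \<and> v \<in> rcar W"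
  unfolding tensor_rel_def by auto

lemma tensor_rel_zero:
  "x \<in> PeE M e \<Longrightarrow> y \<in> PeE M e \<Longrightarrow> w \<in> rcar W \<Longrightarrow> v \<in> rcar W \<Longrightarrow>
   x = \<zero> \<or> w = rzero W \<Longrightarrow> y = \<zero> \<or> v = rzero W \<Longrightarrow> ((x, w), (y, v)) \<in> tensor_rel W"
  unfolding tensor_rel_def by auto

lemma tensor_rel_nonzeroI:
  "x \<in> PeE M e \<Longrightarrow> y \<in> PeE M e \<Longrightarrow> w \<in> rcar W \<Longrightarrow> v \<in> rcar W \<Longrightarrow>
   x \<noteq> \<zero> \<Longrightarrow> w \<noteq> rzero W \<Longrightarrow> y \<noteq> \<zero> \<Longrightarrow> v \<noteq> rzero W \<Longrightarrow>
   a \<in> GJ M e \<Longrightarrow> y = x \<cdot> a \<Longrightarrow> w = ract W a v \<Longrightarrow> ((x, w), (y, v)) \<in> tensor_rel W"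
  unfolding tensor_rel_def by blast

lemma tensor_rel_nonzeroE:
  assumes "((x, w), (y, v)) \<in> tensor_rel W" "x \<noteq> \<zero> \<and> w \<noteq> rzero W \<or> y \<noteq> \<zero> \<and> v \<noteq> rzero W"
  obtains a where "a \<in> GJ M e" "y = x \<cdot> a" "w = ract W a v"
    "x \<noteq> \<zero>" "w \<noteq> rzero W" "y \<noteq> \<zero>" "v \<noteq> rzero W"
  using assms unfolding tensor_rel_def by auto

lemma tensor_rel_GJ:
  assumes W: "rep_GJ M e W" and x: "x \<in> L" and a: "a \<in> GJ M e" and w: "w \<in> rcar W"
  shows "((x, ract W a w), (x \<cdot> a, w)) \<in> tensor_rel W"
proof (cases "w = rzero W")
  case True then show ?thesis
    using rep_GJ_zero_fixed[OF W GJ_in_hatGJ[OF a]] L_subset_PeE[OF x]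
      L_subset_PeE[OF L_mult_GJ[OF x a]] rep_GJ_zero_in[OF W] by (intro tensor_rel_zero) auto
next
  case False
  then show ?thesis using x a w rep_GJ_nonzero[OF W a w] rep_GJ_closed[OF W GJ_in_hatGJ[OF a] w]
      L_mult_GJ[OF x a] L_subset_PeE L_nonzero
    unfolding tensor_rel_def by auto
qed

lemma tensor_rel_refl:
  assumes W: "rep_GJ M e W" and x: "x \<in> PeE M e" and w: "w \<in> rcar W"
  shows "((x, w), (x, w)) \<in> tensor_rel W"
proof (cases "x = \<zero> \<or> w = rzero W")
  case False
  then have "x \<in> L" using x PeE_nonzero by auto
  then show ?thesis using tensor_rel_GJ[OF W _ e_in_GJ w] rep_GJ_e[OF W w] L_def by auto
qed (use x w in \<open>intro tensor_rel_zero, auto\<close>)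

lemma tensor_rel_sym:
  assumes W: "rep_GJ M e W" and r: "((x, w), (y, v)) \<in> tensor_rel W"
  shows "((y, v), (x, w)) \<in> tensor_rel W"
proof (cases "(x = \<zero> \<or> w = rzero W) \<and> (y = \<zero> \<or> v = rzero W)")
  case False
  then obtain a where a: "a \<in> GJ M e" "y = x \<cdot> a" "w = ract W a v"
    and nz: "x \<noteq> \<zero>" "w \<noteq> rzero W" "y \<noteq> \<zero>" "v \<noteq> rzero W"
    using tensor_rel_nonzeroE[OF r] by blast
  note mem = tensor_rel_dom[OF r]
  obtain b where b: "b \<in> GJ M e" "a \<cdot> b = e" "b \<cdot> a = e" using GJ_inverse a by blast
  have xL: "x \<in> L" using mem nz PeE_nonzero by auto
  have "x = y \<cdot> b" using a b xL L_closed GJ_closed unfolding L_def by (simp add: mult_assoc)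
  moreover have "v = ract W b w" using a rep_GJ_inverse[OF W a(1) b(1) b(3)] mem by simp
  ultimately show ?thesis using mem nz b(1) by (intro tensor_rel_nonzeroI) auto
qed (use tensor_rel_dom[OF r] in \<open>intro tensor_rel_zero, auto\<close>)

lemma tensor_rel_trans:
  assumes W: "rep_GJ M e W" and r1: "((x, w), (y, v)) \<in> tensor_rel W" and r2: "((y, v), (q, u)) \<in> tensor_rel W"
  shows "((x, w), (q, u)) \<in> tensor_rel W"
proof (cases "y = \<zero> \<or> v = rzero W")
  case False
  then obtain a where a: "a \<in> GJ M e" "y = x \<cdot> a" "w = ract W a v" and nz: "x \<noteq> \<zero>" "w \<noteq> rzero W"
    using tensor_rel_nonzeroE[OF r1] by blast
  obtain b where b: "b \<in> GJ M e" "q = y \<cdot> b" "v = ract W b u" and nz2: "q \<noteq> \<zero>" "u \<noteq> rzero W"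
    using tensor_rel_nonzeroE[OF r2] False by blast
  note mem = tensor_rel_dom[OF r1] tensor_rel_dom[OF r2]
  have "q = x \<cdot> (a \<cdot> b)" using a b mem PeE_closed GJ_closed by (simp add: mult_assoc)
  moreover have "w = ract W (a \<cdot> b) u"
    using a b rep_GJ_mult[OF W GJ_in_hatGJ[OF a(1)] GJ_in_hatGJ[OF b(1)]] mem by simp
  ultimately show ?thesis using mem nz nz2 GJ_mult_closed[OF a(1) b(1)] by (intro tensor_rel_nonzeroI) auto
next
  case True
  have "x = \<zero> \<or> w = rzero W" using tensor_rel_nonzeroE[OF r1] True by blast
  moreover have "q = \<zero> \<or> u = rzero W" using tensor_rel_nonzeroE[OF r2] True by blast
  ultimately show ?thesis using tensor_rel_dom[OF r1] tensor_rel_dom[OF r2] by (intro tensor_rel_zero) auto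
qed

lemma tensor_rel_equiv:
  assumes W: "rep_GJ M e W" shows "equiv (PeE M e \<times> rcar W) (tensor_rel W)"
proof (rule equivI)
  show "tensor_rel W \<subseteq> (PeE M e \<times> rcar W) \<times> (PeE M e \<times> rcar W)"
    unfolding tensor_rel_def by auto
  show "refl_on (PeE M e \<times> rcar W) (tensor_rel W)"
    unfolding refl_on_def using tensor_rel_refl[OF W] by auto
  show "sym (tensor_rel W)" unfolding sym_def using tensor_rel_sym[OF W] by auto
  show "trans (tensor_rel W)" unfolding trans_def using tensor_rel_trans[OF W] by auto
qed

lemma ind_gen_subset_tensor_rel:
  assumes W: "rep_GJ M e W" shows "ind_gen M e W \<subseteq> tensor_rel W"
proof
  fix p assume "p \<in> ind_gen M e W"
  then consider
      (right) x a w where "p = ((x \<triangleright> a, w), (x, ract W a w))" "x \<in> PeE M e" "a \<in> hatGJ M e" "w \<in> rcar W"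
    | (scalar) x g w where "p = ((g \<cdot> x, w), (x, ract W (g \<cdot> e) w))" "x \<in> PeE M e" "g \<in> G" "w \<in> rcar W"
    | (zero) x w where "p = ((x, rzero W), (\<zero>, w))" "x \<in> PeE M e" "w \<in> rcar W"
    unfolding ind_gen_def by blast
  then show "p \<in> tensor_rel W"
  proof cases
    case right
    show ?thesis
    proof (cases "x = \<zero> \<or> a = \<zero>")
      case True
      then have "x \<triangleright> a = \<zero>" using right PeE_closed GJ_closed hatGJ_iff by (auto simp: pmul_eq)
      moreover have "x = \<zero> \<or> ract W a w = rzero W" using True rep_GJ_mzero[OF W right(4)] by auto
      ultimately show ?thesis unfolding right(1) using right rep_GJ_closed[OF W] by (intro tensor_rel_zero) auto
    next
      case False
      then have xa: "x \<in> L" "a \<in> GJ M e" using right PeE_nonzero hatGJ_iff by auto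
      then have "x \<triangleright> a = x \<cdot> a" using L_mult_GJ L_def pmul_eq by simp
      then show ?thesis using tensor_rel_sym[OF W tensor_rel_GJ[OF W xa right(4)]] right by simp
    qed
  next
    case scalar
    note gC = G_closed[OF scalar(3)]
    show ?thesis
    proof (cases "x = \<zero>")
      case True
      then show ?thesis unfolding scalar(1)
        using gC scalar(4) rep_GJ_closed[OF W GJ_in_hatGJ[OF G_e_in_GJ[OF scalar(3)]] scalar(4)]
        by (intro tensor_rel_zero) auto
    next
      case False
      then have xL: "x \<in> L" using scalar PeE_nonzero by auto
      then show ?thesis using L_mult_G_e[OF xL scalar(3)] using tensor_rel_sym[OF W tensor_rel_GJ[OF W xL G_e_in_GJ[OF scalar(3)] scalar(4)]] scalar by simp
    qed
  next
    case zero then show ?thesis unfolding zero(1) using rep_GJ_zero_in[OF W] by (intro tensor_rel_zero) auto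
  qed
qed

lemma ind_rel_subset_tensor_rel:
  assumes W: "rep_GJ M e W" shows "ind_rel M e W \<subseteq> tensor_rel W"
proof
  let ?S = "ind_gen M e W \<union> (ind_gen M e W)\<inverse>"
  have S: "?S \<subseteq> tensor_rel W" using ind_gen_subset_tensor_rel[OF W] tensor_rel_sym[OF W] by auto
  fix p assume "p \<in> ind_rel M e W"
  then obtain a b where p: "p = (a, b)" "(a, b) \<in> ?S\<^sup>*" "(a, b) \<in> (PeE M e \<times> rcar W) \<times> (PeE M e \<times> rcar W)"
    unfolding ind_rel_def by auto
  have "a = b \<or> (a, b) \<in> tensor_rel W" using p(2)
  proof (induction rule: rtrancl_induct)
    case (step y c)
    then have "(y, c) \<in> tensor_rel W" using S by blast
    then show ?case using step.IH tensor_rel_trans[OF W] by (metis prod.collapse)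
  qed simp
  then show "p \<in> tensor_rel W" using p tensor_rel_refl[OF W] by auto
qed

lemma tensor_rel_subset_ind_rel:
  assumes W: "rep_GJ M e W" shows "tensor_rel W \<subseteq> ind_rel M e W"
proof
  let ?S = "ind_gen M e W \<union> (ind_gen M e W)\<inverse>"
  have to_zero: "((x, w), (\<zero>, rzero W)) \<in> ?S" if "x \<in> PeE M e" "w \<in> rcar W" "x = \<zero> \<or> w = rzero W" for x w
  proof (cases "x = \<zero>")
    case True
    then have "((\<zero>, rzero W), (x, w)) \<in> ind_gen M e W" unfolding ind_gen_def using that by blast
    then show ?thesis by blast
  next
    case False
    then show ?thesis unfolding ind_gen_def using that rep_GJ_zero_in[OF W] by blast
  qed
  fix p assume p: "p \<in> tensor_rel W"
  then obtain x w y v where p': "p = ((x, w), (y, v))" by (metis prod.collapse)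
  note mem = tensor_rel_dom[OF p[unfolded p']]
  have "((x, w), (y, v)) \<in> ?S\<^sup>*"
  proof (cases "(x = \<zero> \<or> w = rzero W) \<and> (y = \<zero> \<or> v = rzero W)")
    case True
    then have "((x, w), (\<zero>, rzero W)) \<in> ?S" "((\<zero>, rzero W), (y, v)) \<in> ?S"
      using to_zero[of x w] to_zero[of y v] mem by blast+
    then show ?thesis by (meson r_into_rtrancl rtrancl_trans)
  next
    case False
    then obtain a where a: "a \<in> GJ M e" "y = x \<cdot> a" "w = ract W a v" "x \<noteq> \<zero>"
      using tensor_rel_nonzeroE[OF p[unfolded p']] by blast
    have "x \<triangleright> a = x \<cdot> a" using L_mult_GJ[OF PeE_nonzero[OF _ a(4)] a(1)] mem L_def pmul_eq by simp
    moreover have "((x \<triangleright> a, v), (x, ract W a v)) \<in> ind_gen M e W"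
      using mem GJ_in_hatGJ[OF a(1)] unfolding ind_gen_def by blast
    ultimately show ?thesis using a by auto
  qed
  then show "p \<in> ind_rel M e W" unfolding ind_rel_def using p' mem by auto
qed

lemma ind_rel_eq_tensor_rel: "rep_GJ M e W \<Longrightarrow> ind_rel M e W = tensor_rel W"
  using ind_rel_subset_tensor_rel tensor_rel_subset_ind_rel by blast

definition tensor :: "('m, 'w) obj \<Rightarrow> 'm \<Rightarrow> 'w \<Rightarrow> ('m \<times> 'w) set" where
  "tensor W x w = tensor_rel W `` {(x, w)}"

context
  fixes W :: "('m, 'w) obj"
  assumes W: "rep_GJ M e W"
begin

lemma ind_simps:
  "rcar (ind M e W) = (PeE M e \<times> rcar W) // tensor_rel W"
  "rzero (ind M e W) = tensor W \<zero> (rzero W)"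
  "ract (ind M e W) m c = tensor_rel W `` ((\<lambda>(x, w). (m \<triangleright> x, w)) ` c)"
  by (simp_all add: ind_def tensor_def ind_rel_eq_tensor_rel[OF W])

lemma tensor_in_ind: "x \<in> PeE M e \<Longrightarrow> w \<in> rcar W \<Longrightarrow> tensor W x w \<in> rcar (ind M e W)"
  unfolding tensor_def ind_simps by (simp add: quotientI)

lemma ind_cases:
  assumes "c \<in> rcar (ind M e W)"
  obtains x w where "x \<in> PeE M e" "w \<in> rcar W" "c = tensor W x w"
  using assms unfolding ind_simps tensor_def by (auto elim!: quotientE)

lemma tensor_eq_iff:
  assumes "x \<in> PeE M e" "y \<in> PeE M e" "w \<in> rcar W" "v \<in> rcar W"
  shows "tensor W x w = tensor W y v \<longleftrightarrow> ((x, w), (y, v)) \<in> tensor_rel W"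
  unfolding tensor_def using eq_equiv_class_iff[OF tensor_rel_equiv[OF W]] assms by simp

lemma tensor_eq_zero_iff:
  assumes x: "x \<in> PeE M e" and w: "w \<in> rcar W"
  shows "tensor W x w = rzero (ind M e W) \<longleftrightarrow> x = \<zero> \<or> w = rzero W"
proof -
  have "tensor W x w = rzero (ind M e W) \<longleftrightarrow> ((x, w), (\<zero>, rzero W)) \<in> tensor_rel W"
    using tensor_eq_iff[OF x zero_in_PeE w rep_GJ_zero_in[OF W]] by (simp add: ind_simps)
  also have "\<dots> \<longleftrightarrow> x = \<zero> \<or> w = rzero W"
  proof
    assume "((x, w), (\<zero>, rzero W)) \<in> tensor_rel W"
    from tensor_rel_nonzeroE[OF this] show "x = \<zero> \<or> w = rzero W" by blast
  qed (use tensor_rel_zero[OF x zero_in_PeE w rep_GJ_zero_in[OF W]] in simp)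
  finally show ?thesis .
qed

lemma tensor_nonzeroD:
  assumes "x \<in> PeE M e" "w \<in> rcar W" "tensor W x w \<noteq> rzero (ind M e W)"
  shows "x \<in> L" "w \<noteq> rzero W"
  using tensor_eq_zero_iff assms PeE_nonzero by auto

lemma actP_respects_tensor_rel:
  assumes m: "m \<in> Mc" and r: "((x, w), (y, v)) \<in> tensor_rel W"
  shows "((m \<triangleright> x, w), (m \<triangleright> y, v)) \<in> tensor_rel W"
proof -
  note mem = tensor_rel_dom[OF r]
  have mem2: "m \<triangleright> x \<in> PeE M e" "m \<triangleright> y \<in> PeE M e" using actP_closed m mem by auto
  show ?thesis
  proof (cases "(x = \<zero> \<or> w = rzero W) \<and> (y = \<zero> \<or> v = rzero W)")
    case True then show ?thesis using m mem mem2 by (intro tensor_rel_zero) auto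
  next
    case False
    then obtain a where a: "a \<in> GJ M e" "y = x \<cdot> a" "w = ract W a v"
      and nz: "x \<noteq> \<zero>" "w \<noteq> rzero W" "y \<noteq> \<zero>" "v \<noteq> rzero W"
      using tensor_rel_nonzeroE[OF r] by blast
    have xL: "x \<in> L" using nz mem PeE_nonzero by auto
    have my: "m \<cdot> y = m \<cdot> x \<cdot> a" using a(2) m L_closed[OF xL] GJ_closed[OF a(1)] by (simp add: mult_assoc)
    show ?thesis
    proof (cases "m \<cdot> x \<in> J")
      case True
      then have mxL: "m \<cdot> x \<in> L" using L_mult_closed m xL by simp
      have "m \<triangleright> y = (m \<triangleright> x) \<cdot> a" "m \<triangleright> x = m \<cdot> x"
        using True mult_L_GJ_in_J_iff[OF m xL a(1)] a(2) my by (simp_all add: pmul_eq)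
      moreover have "m \<cdot> x \<cdot> a \<noteq> \<zero>" "m \<cdot> x \<noteq> \<zero>" using L_nonzero[OF L_mult_GJ[OF mxL a(1)]] L_nonzero[OF mxL] by auto
      ultimately show ?thesis using mem2 mem nz a by (intro tensor_rel_nonzeroI) auto
    next
      case False
      then have "m \<triangleright> y = \<zero>" "m \<triangleright> x = \<zero>"
        using mult_L_GJ_in_J_iff[OF m xL a(1)] a(2) by (simp_all add: pmul_eq)
      then show ?thesis using mem by (intro tensor_rel_zero) auto
    qed
  qed
qed

lemma ind_act_tensor:
  assumes m: "m \<in> Mc" and x: "x \<in> PeE M e" and w: "w \<in> rcar W"
  shows "ract (ind M e W) m (tensor W x w) = tensor W (m \<triangleright> x) w"
proof -
  let ?f = "\<lambda>(x, w). (m \<triangleright> x, w)"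
  have "ract (ind M e W) m (tensor W x w) = tensor_rel W `` (?f ` (tensor_rel W `` {(x, w)}))"
    unfolding ind_simps tensor_def by simp
  also have "\<dots> = tensor_rel W `` {?f (x, w)}"
    using actP_respects_tensor_rel[OF m] x w
    by (intro Image_equiv_class_image[OF tensor_rel_equiv[OF W]]) auto
  finally show ?thesis unfolding tensor_def by simp
qed

lemma ind_act_closed:
  assumes m: "m \<in> Mc" and c: "c \<in> rcar (ind M e W)"
  shows "ract (ind M e W) m c \<in> rcar (ind M e W)"
  using c by (cases rule: ind_cases) (simp add: ind_act_tensor m actP_closed tensor_in_ind)

lemma ind_act_mult:
  assumes m: "m \<in> Mc" and n: "n \<in> Mc" and c: "c \<in> rcar (ind M e W)"
  shows "ract (ind M e W) (m \<cdot> n) c = ract (ind M e W) m (ract (ind M e W) n c)"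
  using c by (cases rule: ind_cases) (simp add: ind_act_tensor m n actP_closed actP_mult)

lemma ind_act_unit:
  assumes c: "c \<in> rcar (ind M e W)" shows "ract (ind M e W) \<one> c = c"
  using c by (cases rule: ind_cases) (simp add: ind_act_tensor actP_unit)

lemma ind_act_mzero:
  assumes c: "c \<in> rcar (ind M e W)" shows "ract (ind M e W) \<zero> c = rzero (ind M e W)"
  using c by (cases rule: ind_cases) (simp add: ind_act_tensor actP_mzero tensor_eq_zero_iff)

lemma ind_act_zero_fixed: "m \<in> Mc \<Longrightarrow> ract (ind M e W) m (rzero (ind M e W)) = rzero (ind M e W)"
  using ind_act_tensor[OF _ zero_in_PeE rep_GJ_zero_in[OF W]] by (simp add: ind_simps(2))

lemma L_actP_tensor_e: "x \<in> L \<Longrightarrow> w \<in> rcar W \<Longrightarrow> ract (ind M e W) x (tensor W e w) = tensor W x w"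
  using ind_act_tensor[OF L_closed L_subset_PeE[OF e_in_L]] L_actP_e by simp

lemma tensor_GJ_shift:
  assumes x: "x \<in> L" and a: "a \<in> GJ M e" and w: "w \<in> rcar W"
  shows "tensor W (x \<cdot> a) w = tensor W x (ract W a w)"
  using tensor_rel_GJ[OF W x a w] tensor_eq_iff[OF L_subset_PeE[OF x] L_subset_PeE[OF L_mult_GJ[OF x a]]
      rep_GJ_closed[OF W GJ_in_hatGJ[OF a] w] w] by simp

text \<open>The free \<open>G\<close>-action on \<open>x \<otimes> w \<noteq> 0\<close>: if \<open>g x \<otimes> w = x \<otimes> w\<close> then \<open>g x = x a\<close> with
  \<open>w = a w\<close>; cancelling \<open>x\<close> on the left (stability) gives \<open>g e = a\<close>, so \<open>g e\<close> fixes \<open>w\<close>.\<close>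

lemma ind_free:
  assumes g: "g \<in> G" and c: "c \<in> rcar (ind M e W)"
    and nz: "c \<noteq> rzero (ind M e W)" and eq: "ract (ind M e W) g c = c"
  shows "g = \<one>"
proof -
  obtain x w where xw: "x \<in> PeE M e" "w \<in> rcar W" "c = tensor W x w" using ind_cases[OF c] by blast
  have xL: "x \<in> L" and wnz: "w \<noteq> rzero W" using tensor_nonzeroD[OF xw(1,2)] nz xw(3) by auto
  note gC = G_closed[OF g] and xC = L_closed[OF xL]
  have gxL: "g \<cdot> x \<in> L" using G_mult_L xL g by simp
  then have "tensor W (g \<cdot> x) w = tensor W x w"
    using eq ind_act_tensor[OF gC xw(1,2)] xw L_def by (simp add: pmul_eq)
  then have r: "((g \<cdot> x, w), (x, w)) \<in> tensor_rel W" using tensor_eq_iff[OF L_subset_PeE[OF gxL] xw(1) xw(2) xw(2)] by simp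
  obtain a where a: "a \<in> GJ M e" "x = g \<cdot> x \<cdot> a" "w = ract W a w"
    using tensor_rel_nonzeroE[OF r] L_nonzero[OF gxL] wnz by blast
  note aC = GJ_closed[OF a(1)]
  obtain u where u: "u \<in> Mc" "u \<cdot> x = e" using J_left_unit xL L_def by blast
  have "e = (u \<cdot> g) \<cdot> x \<cdot> a" using u a gC xC aC by (simp add: mult_assoc)
  also have "\<dots> = (g \<cdot> u) \<cdot> x \<cdot> a" using G_central[OF g u(1)] by simp
  also have "\<dots> = g \<cdot> (u \<cdot> x) \<cdot> a" using u gC xC aC by (simp add: mult_assoc)
  also have "\<dots> = g \<cdot> a" using u gC aC GJ_e_left[OF a(1)] by (simp add: mult_assoc)
  finally have ega: "e = g \<cdot> a" .
  obtain h where h: "h \<in> G" "h \<cdot> g = \<one>" "g \<cdot> h = \<one>" using G_inverse[OF g] by blast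
  have "a = h \<cdot> e" using ega h gC aC G_closed[OF h(1)] by (simp flip: mult_assoc)
  then have "h = \<one>" using rep_GJ_free[OF W h(1) xw(2) wnz] a by simp
  then show ?thesis using h gC by simp
qed

lemma ind_vect_obj: "vect_obj M (ind M e W)"
proof (rule vect_objI)
  have "finite (PeE M e)" using PeE_eq L_closed finite_Mc finite_subset by (metis finite_insert subsetI)
  then show "finite (rcar (ind M e W))" unfolding ind_simps
    using finite_quotient[OF _ equiv_type[OF tensor_rel_equiv[OF W]]] rep_GJ_finite[OF W] by simp
  show "rzero (ind M e W) \<in> rcar (ind M e W)"
    using tensor_in_ind[OF zero_in_PeE rep_GJ_zero_in[OF W]] by (simp add: ind_simps(2))
  show "ract (ind M e W) g c \<in> rcar (ind M e W)" if "g \<in> G" "c \<in> rcar (ind M e W)" for g c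
    using ind_act_closed[OF G_closed] that by blast
  show "ract (ind M e W) \<one> c = c" if "c \<in> rcar (ind M e W)" for c
    using ind_act_unit that by blast
  show "ract (ind M e W) (g \<cdot> h) c = ract (ind M e W) g (ract (ind M e W) h c)"
    if "g \<in> G" "h \<in> G" "c \<in> rcar (ind M e W)" for g h c
    using ind_act_mult[OF G_closed G_closed] that by blast
  show "ract (ind M e W) g (rzero (ind M e W)) = rzero (ind M e W)" if "g \<in> G" for g
    using ind_act_zero_fixed[OF G_closed] that by blast
  show "g = \<one>" if "g \<in> G" "c \<in> rcar (ind M e W)" "c \<noteq> rzero (ind M e W)"
    "ract (ind M e W) g c = c" for g c
    using ind_free that by blast
qed

lemma ind_act_orbit:
  assumes m: "m \<in> Mc" and c1: "c1 \<in> rcar (ind M e W)" and c2: "c2 \<in> rcar (ind M e W)"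
    and eq: "ract (ind M e W) m c1 = ract (ind M e W) m c2" and nz: "ract (ind M e W) m c1 \<noteq> rzero (ind M e W)"
  shows "orbit M (ind M e W) c1 = orbit M (ind M e W) c2"
proof -
  obtain x w where xw: "x \<in> PeE M e" "w \<in> rcar W" "c1 = tensor W x w" using ind_cases[OF c1] by blast
  obtain y v where yv: "y \<in> PeE M e" "v \<in> rcar W" "c2 = tensor W y v" using ind_cases[OF c2] by blast
  note P = actP_closed[OF m xw(1)] actP_closed[OF m yv(1)]
  have nz1: "tensor W (m \<triangleright> x) w \<noteq> rzero (ind M e W)" using nz ind_act_tensor[OF m xw(1,2)] xw by simp
  have r: "((m \<triangleright> x, w), (m \<triangleright> y, v)) \<in> tensor_rel W"
    using eq ind_act_tensor[OF m xw(1,2)] ind_act_tensor[OF m yv(1,2)] xw yv tensor_eq_iff[OF P xw(2) yv(2)] by simp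
  have pxL: "m \<triangleright> x \<in> L" and wnz: "w \<noteq> rzero W" using tensor_nonzeroD[OF P(1) xw(2) nz1] by auto
  then obtain a where a: "a \<in> GJ M e" "m \<triangleright> y = (m \<triangleright> x) \<cdot> a" "w = ract W a v" and pynz: "m \<triangleright> y \<noteq> \<zero>"
    using tensor_rel_nonzeroE[OF r] L_nonzero[OF pxL] by blast
  have xL: "x \<in> L" using L_nonzero[OF pxL] m xw(1) PeE_nonzero by fastforce
  note C = L_closed[OF xL] GJ_closed[OF a(1)]
  have xaL: "x \<cdot> a \<in> L" using L_mult_GJ xL a by simp
  have "m \<cdot> (x \<cdot> a) = m \<triangleright> y" using a actP_nonzeroD[OF L_nonzero[OF pxL]] C m by (simp add: mult_assoc)
  then have eq': "m \<triangleright> (x \<cdot> a) = m \<triangleright> y" using actP_nonzeroD[OF pynz] by (simp add: pmul_eq)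
  then have "m \<triangleright> (x \<cdot> a) \<noteq> \<zero>" using pynz by simp
  then obtain g where g: "g \<in> G" "y = g \<cdot> (x \<cdot> a)"
    using actP_eq_imp_G_orbit[OF m L_subset_PeE[OF xaL] yv(1) eq'] by blast
  have "c2 = tensor W (g \<triangleright> (x \<cdot> a)) v" using yv g G_mult_L[OF xaL g(1)] L_def by (simp add: pmul_eq)
  also have "\<dots> = ract (ind M e W) g (tensor W (x \<cdot> a) v)"
    using ind_act_tensor[OF G_closed[OF g(1)] L_subset_PeE[OF xaL] yv(2)] by simp
  also have "\<dots> = ract (ind M e W) g c1" using tensor_GJ_shift[OF xL a(1) yv(2)] a(3) xw(3) by simp
  finally show ?thesis using orbit_shift[OF ind_vect_obj c1 g(1)] by simp
qed

lemma ind_rep: "rep_M M (ind M e W)"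
proof (rule rep_MI)
  show "vect_morph M (ind M e W) (ind M e W) (ract (ind M e W) m)" if m: "m \<in> Mc" for m
    unfolding vect_morph_def
  proof (intro conjI ballI impI)
    show "ract (ind M e W) m (ract (ind M e W) g c) = ract (ind M e W) g (ract (ind M e W) m c)"
      if "g \<in> G" "c \<in> rcar (ind M e W)" for g c
      using action_G_commute[where f = "ract (ind M e W)", OF ind_act_mult m that] .
  qed (use ind_act_closed[OF m] ind_act_zero_fixed[OF m] ind_act_orbit[OF m] in blast)+
qed (use ind_vect_obj ind_act_mult ind_act_unit ind_act_mzero in blast)+

end

section \<open>The simple quotient \<open>Q(W)\<close>\<close>

lemma subrep_GJI:
  assumes W: "rep_GJ M e W" and "S \<subseteq> rcar W" "rzero W \<in> S"
    and closed: "\<And>a w. a \<in> GJ M e \<Longrightarrow> w \<in> S \<Longrightarrow> ract W a w \<in> S"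
  shows "subrep_GJ M e W S"
  unfolding subrep_GJ_def
proof (intro conjI ballI)
  show "ract (scal M e W) g w \<in> S" if "g \<in> G" "w \<in> S" for g w
    using closed[OF G_e_in_GJ] that by simp
  show "ract W a w \<in> S" if "a \<in> hatGJ M e" "w \<in> S" for a w
    using that closed assms(2,3) rep_GJ_mzero[OF W] unfolding hatGJ_iff by auto
qed (use assms in auto)

context
  fixes W :: "('m, 'w) obj"
  assumes W: "rep_GJ M e W"
begin

lemma tensor_e_eq_zero_iff: "w \<in> rcar W \<Longrightarrow> tensor W e w = rzero (ind M e W) \<longleftrightarrow> w = rzero W"
  using tensor_eq_zero_iff[OF W L_subset_PeE[OF e_in_L]] e_nonzero by simp

lemma GJ_act_tensor_e:
  assumes a: "a \<in> GJ M e" and w: "w \<in> rcar W"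
  shows "ract (ind M e W) a (tensor W e w) = tensor W e (ract W a w)"
  using L_actP_tensor_e[OF W GJ_subset_L[OF a] w] tensor_GJ_shift[OF W e_in_L a w] GJ_e_left[OF a] by simp

lemma tensor_e_notin_Nset:
  assumes w: "w \<in> rcar W" "w \<noteq> rzero W"
  shows "tensor W e w \<notin> Nset M e (ind M e W)"
proof
  assume "tensor W e w \<in> Nset M e (ind M e W)"
  then have "\<forall>m\<in>Mc. ract (ind M e W) (e \<cdot> m) (tensor W e w) = rzero (ind M e W)" by (simp add: Nset_def)
  from bspec[OF this unit_closed] show False using GJ_act_tensor_e[OF e_in_GJ w(1)] rep_GJ_e[OF W w(1)] tensor_e_eq_zero_iff w by simp
qed

text \<open>An element outside \<open>N\<close> is sent by some \<open>e m\<close> to a nonzero \<open>y \<otimes> w\<close> with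
  \<open>y \<in> e L \<subseteq> G\<^sub>J\<close>, which equals \<open>e \<otimes> y w\<close>.\<close>

lemma outside_Nset_reaches_tensor_e:
  assumes cI: "c \<in> rcar (ind M e W)" and cN: "c \<notin> Nset M e (ind M e W)"
  obtains m w where "m \<in> Mc" "w \<in> rcar W" "w \<noteq> rzero W" "ract (ind M e W) m c = tensor W e w"
proof -
  let ?I = "ind M e W"
  obtain m where m: "m \<in> Mc" "ract ?I (e \<cdot> m) c \<noteq> rzero ?I" using cI cN unfolding Nset_def by blast
  obtain x w where xw: "x \<in> PeE M e" "w \<in> rcar W" "c = tensor W x w" using ind_cases[OF W cI] by blast
  define y where "y = (e \<cdot> m) \<triangleright> x"
  have eq: "ract ?I (e \<cdot> m) c = tensor W y w" using ind_act_tensor[OF W _ xw(1,2)] m xw(3) y_def by simp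
  have "y \<in> PeE M e" "tensor W y w \<noteq> rzero ?I" using actP_closed[OF _ xw(1)] m eq y_def by simp_all
  then have yL: "y \<in> L" and wnz: "w \<noteq> rzero W" using tensor_nonzeroD[OF W _ xw(2)] by blast+
  have "e \<cdot> y = y" using actP_nonzeroD[OF L_nonzero[OF yL[unfolded y_def]]] m xw PeE_closed y_def
    by (simp add: mult_assoc)
  then have yG: "y \<in> GJ M e" using GJ_iff yL unfolding L_def by simp
  have "ract ?I (e \<cdot> m) c = tensor W e (ract W y w)"
    using eq GJ_act_tensor_e[OF yG xw(2)] L_actP_tensor_e[OF W yL xw(2)] by simp
  then show ?thesis
    using that[OF mult_closed[OF e_closed m(1)]] rep_GJ_closed[OF W GJ_in_hatGJ[OF yG] xw(2)]
      rep_GJ_nonzero[OF W yG xw(2) wnz] by blast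
qed

lemma subrep_tensor_e_preimage:
  assumes S: "subrep_M M (ind M e W) S"
  shows "subrep_GJ M e W {v \<in> rcar W. tensor W e v \<in> S}"
proof (rule subrep_GJI[OF W])
  have "tensor W e (rzero W) = rzero (ind M e W)"
    using tensor_e_eq_zero_iff[OF rep_GJ_zero_in[OF W]] by simp
  then show "rzero W \<in> {v \<in> rcar W. tensor W e v \<in> S}"
    using rep_GJ_zero_in[OF W] subrep_M_zero[OF S] by simp
  show "ract W a v \<in> {v \<in> rcar W. tensor W e v \<in> S}" if a: "a \<in> GJ M e" and v: "v \<in> {v \<in> rcar W. tensor W e v \<in> S}" for a v
  proof -
    have "tensor W e (ract W a v) = ract (ind M e W) a (tensor W e v)" using GJ_act_tensor_e[OF a] v by simp
    then show ?thesis using subrep_M_closed[OF S GJ_closed[OF a]] rep_GJ_closed[OF W GJ_in_hatGJ[OF a]] v by simp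
  qed
qed auto

lemma subrep_containing_tensor_e:
  assumes S: "subrep_M M (ind M e W) S" and eW: "\<And>w. w \<in> rcar W \<Longrightarrow> tensor W e w \<in> S"
  shows "S = rcar (ind M e W)"
proof
  show "rcar (ind M e W) \<subseteq> S"
  proof
    fix d assume "d \<in> rcar (ind M e W)"
    then obtain x w where xw: "x \<in> PeE M e" "w \<in> rcar W" "d = tensor W x w" using ind_cases[OF W] by blast
    show "d \<in> S"
    proof (cases "x = \<zero>")
      case True
      then have "d = rzero (ind M e W)" using xw tensor_eq_zero_iff[OF W xw(1,2)] by simp
      then show ?thesis using subrep_M_zero[OF S] by simp
    next
      case False then have xL: "x \<in> L" using xw PeE_nonzero by simp
      show ?thesis using subrep_M_closed[OF S L_closed[OF xL] eW[OF xw(2)]] L_actP_tensor_e[OF W xL xw(2)] xw(3) by simp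
    qed
  qed
qed (rule subrep_M_subset[OF S])

end

context
  fixes W :: "('m, 'w) obj"
  assumes W: "simple_GJ M e W"
begin

lemma Nset_ind_ne_carrier: "Nset M e (ind M e W) \<noteq> rcar (ind M e W)"
proof -
  obtain w where "w \<in> rcar W" "w \<noteq> rzero W" using simple_GJ_nonzero[OF W] by blast
  then show ?thesis using tensor_e_notin_Nset[OF simple_GJ_rep[OF W]]
      tensor_in_ind[OF simple_GJ_rep[OF W] L_subset_PeE[OF e_in_L]] by blast
qed

text \<open>Maximality of \<open>N\<close>: a subrepresentation not inside \<open>N\<close> contains some \<open>e \<otimes> w \<noteq> 0\<close>;
  by simplicity of \<open>W\<close> it then contains all \<open>e \<otimes> w\<close>, which generate \<open>V\<up>\<^sub>e\<close>.\<close>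

lemma Nset_ind_maximal:
  assumes S: "subrep_M M (ind M e W) S" and ne: "S \<noteq> rcar (ind M e W)"
  shows "S \<subseteq> Nset M e (ind M e W)"
proof (rule ccontr)
  note W' = simple_GJ_rep[OF W]
  assume "\<not> S \<subseteq> Nset M e (ind M e W)"
  then obtain c where c: "c \<in> S" "c \<notin> Nset M e (ind M e W)" by blast
  then obtain m w where "m \<in> Mc" "w \<in> rcar W" "w \<noteq> rzero W" "ract (ind M e W) m c = tensor W e w"
    using outside_Nset_reaches_tensor_e[OF W'] subrep_M_subset[OF S] by blast
  then have w: "w \<in> rcar W" "w \<noteq> rzero W" "tensor W e w \<in> S" using subrep_M_closed[OF S _ c(1)] by metis+
  let ?T = "{v \<in> rcar W. tensor W e v \<in> S}"
  have "?T = {rzero W} \<or> ?T = rcar W" using simple_GJ_subrep[OF W subrep_tensor_e_preimage[OF W' S]] .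
  then have "?T = rcar W" using w by blast
  then have "S = rcar (ind M e W)" using subrep_containing_tensor_e[OF W' S] by blast
  then show False using ne by simp
qed

end

lemma Qrep_simps:
  "rcar (Qrep M e W) = (rcar (ind M e W) - Nset M e (ind M e W)) \<union> {rzero (ind M e W)}"
  "rzero (Qrep M e W) = rzero (ind M e W)"
  "ract (Qrep M e W) m c =
    (if ract (ind M e W) m c \<in> Nset M e (ind M e W) then rzero (ind M e W) else ract (ind M e W) m c)"
  unfolding Qrep_def by simp_all

lemma Nset_ind_subrep: "rep_GJ M e W \<Longrightarrow> subrep_M M (ind M e W) (Nset M e (ind M e W))"
  using Nset_subrep[OF ind_rep e_closed] .

lemma Qrep_rep: "rep_GJ M e W \<Longrightarrow> rep_M M (Qrep M e W)"
  unfolding Qrep_def using quot_rep[OF ind_rep Nset_ind_subrep] .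

lemma Qrep_carrier_subset: "rep_GJ M e W \<Longrightarrow> rcar (Qrep M e W) \<subseteq> rcar (ind M e W)"
  using rep_M_zero_in[OF ind_rep] by (auto simp: Qrep_simps)

lemma tensor_e_in_Qrep:
  assumes W: "rep_GJ M e W" and w: "w \<in> rcar W"
  shows "tensor W e w \<in> rcar (Qrep M e W)"
  using tensor_in_ind[OF W L_subset_PeE[OF e_in_L] w] tensor_e_notin_Nset[OF W w] tensor_e_eq_zero_iff[OF W w]
  by (cases "w = rzero W") (auto simp: Qrep_simps)

lemma Qrep_simple:
  assumes W: "simple_GJ M e W" shows "simple_M M (Qrep M e W)"
proof -
  note W' = simple_GJ_rep[OF W]
  let ?I = "ind M e W" and ?N = "Nset M e (ind M e W)" and ?Q = "Qrep M e W"
  obtain w where w: "w \<in> rcar W" "w \<noteq> rzero W" using simple_GJ_nonzero[OF W] by blast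
  have "tensor W e w \<in> rcar ?Q" "tensor W e w \<noteq> rzero ?Q"
    using tensor_e_in_Qrep[OF W' w(1)] tensor_e_eq_zero_iff[OF W' w(1)] w(2) by (simp_all add: Qrep_simps)
  then have ne: "rcar ?Q \<noteq> {rzero ?Q}" by auto
  have "S = {rzero ?Q} \<or> S = rcar ?Q" if S: "subrep_M M ?Q S" for S
  proof -
    have "subrep_M M ?I (S \<union> ?N)"
      using quot_subrep_union[OF ind_rep[OF W'] Nset_ind_subrep[OF W']] S unfolding Qrep_def .
    then have "S \<union> ?N = rcar ?I \<or> S \<union> ?N \<subseteq> ?N" using Nset_ind_maximal[OF W] by blast
    then show ?thesis using subrep_M_subset[OF S] subrep_M_zero[OF S] by (auto simp: Qrep_simps)
  qed
  then show ?thesis unfolding simple_M_def using Qrep_rep[OF W'] ne by blast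
qed

lemma IJ_subset_Ann_Qrep:
  assumes W: "rep_GJ M e W" shows "IJ M J \<subseteq> Ann M (Qrep M e W)"
proof
  fix x assume "x \<in> IJ M J"
  then have xC: "x \<in> Mc" and xe: "e \<notin> Jideal M x" using IJ_iff by auto
  have "ract (Qrep M e W) x c = rzero (Qrep M e W)" if c: "c \<in> rcar (Qrep M e W)" for c
  proof -
    obtain y v where yv: "y \<in> PeE M e" "v \<in> rcar W" "c = tensor W y v"
      using ind_cases[OF W] c Qrep_carrier_subset[OF W] by blast
    have "x \<cdot> y \<notin> J" using J_left_factor[OF xC PeE_closed[OF yv(1)]] xe by blast
    then have "ract (ind M e W) x c = rzero (ind M e W)"
      using ind_act_tensor[OF W xC yv(1,2)] yv(3) tensor_eq_zero_iff[OF W zero_in_PeE yv(2)] by (simp add: pmul_eq)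
    then show ?thesis by (simp add: Qrep_simps)
  qed
  then show "x \<in> Ann M (Qrep M e W)" unfolding Ann_def using xC by blast
qed

text \<open>If \<open>e = u x v\<close>, then \<open>y = v e \<in> L\<close> and \<open>x y \<in> L\<close>; for \<open>w \<noteq> 0\<close>, \<open>x\<close> does not kill
  \<open>y \<otimes> w\<close> in \<open>Q(W)\<close> since \<open>e u\<close> maps \<open>x y \<otimes> w\<close> back to \<open>e \<otimes> w \<notin> N\<close>.\<close>

lemma Ann_Qrep_subset_IJ:
  assumes W: "simple_GJ M e W" shows "Ann M (Qrep M e W) \<subseteq> IJ M J"
proof
  note W' = simple_GJ_rep[OF W]
  let ?I = "ind M e W" and ?N = "Nset M e (ind M e W)" and ?Q = "Qrep M e W"
  fix x assume x: "x \<in> Ann M ?Q"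
  then have xC: "x \<in> Mc" unfolding Ann_def by blast
  show "x \<in> IJ M J"
  proof (rule ccontr)
    assume "x \<notin> IJ M J"
    then obtain u v where uv: "u \<in> Mc" "v \<in> Mc" and e_eq: "e = u \<cdot> x \<cdot> v" using IJ_iff xC Jideal_iff by blast
    obtain w where w: "w \<in> rcar W" "w \<noteq> rzero W" using simple_GJ_nonzero[OF W] by blast
    define y where "y = v \<cdot> e"
    have yC: "y \<in> Mc" using uv y_def by simp
    have "e \<cdot> u \<cdot> (x \<cdot> y) = e \<cdot> (u \<cdot> x \<cdot> v) \<cdot> e" using uv xC unfolding y_def by (simp add: mult_assoc)
    then have exy: "e \<cdot> u \<cdot> (x \<cdot> y) = e" using e_eq[symmetric] by simp
    then have "e \<in> Jideal M y" using Jideal_mult[of "e \<cdot> u \<cdot> x" y \<one>] uv xC yC by (simp add: mult_assoc)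
    moreover have "y \<in> Jideal M e" using Jideal_mult_left[of v e] uv y_def by simp
    ultimately have yL: "y \<in> L" unfolding L_def y_def using J_iff yC uv by (simp add: mult_assoc)
    have "e \<in> Jideal M (x \<cdot> y)" using Jideal_mult_left[of "e \<cdot> u" "x \<cdot> y"] uv xC yC exy by simp
    then have xyJ: "x \<cdot> y \<in> J" using J_mult_leftI[OF xC] yL L_def by blast
    have xyL: "x \<cdot> y \<in> L" using L_mult_closed[OF xC yL xyJ] .
    have xc: "ract ?I x (tensor W y w) = tensor W (x \<cdot> y) w"
      using ind_act_tensor[OF W' xC L_subset_PeE[OF yL] w(1)] xyJ by (simp add: pmul_eq)
    have "ract ?I (e \<cdot> u) (ract ?I x (tensor W y w)) = tensor W e w"
      using xc ind_act_tensor[OF W' _ L_subset_PeE[OF xyL] w(1)] uv exy by (simp add: pmul_eq)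
    then have xcN: "ract ?I x (tensor W y w) \<notin> ?N"
      using tensor_e_eq_zero_iff[OF W' w(1)] w(2) uv unfolding Nset_def by auto
    then have "tensor W y w \<notin> ?N" using subrep_M_closed[OF Nset_ind_subrep[OF W'] xC] by blast
    then have "tensor W y w \<in> rcar ?Q" using tensor_in_ind[OF W' L_subset_PeE[OF yL] w(1)] by (simp add: Qrep_simps)
    then have "ract ?Q x (tensor W y w) = rzero ?Q" using x unfolding Ann_def by blast
    then have "tensor W (x \<cdot> y) w = rzero ?I" using xc xcN by (simp add: Qrep_simps)
    then show False using tensor_eq_zero_iff[OF W' L_subset_PeE[OF xyL] w(1)] L_nonzero[OF xyL] w(2) by simp
  qed
qed

lemma Qrep_apex: "simple_GJ M e W \<Longrightarrow> has_apex M (Qrep M e W) J"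
  unfolding has_apex_def using regular_J IJ_subset_Ann_Qrep[OF simple_GJ_rep] Ann_Qrep_subset_IJ by blast

section \<open>Restriction\<close>

lemma res_simps [simp]:
  "rcar (res M e V) = ract V e ` rcar V" "rzero (res M e V) = rzero V" "ract (res M e V) = ract V"
  unfolding res_def by simp_all

lemma
  assumes "morph_GJ M e V W f"
  shows morph_GJ_closed: "v \<in> rcar V \<Longrightarrow> f v \<in> rcar W"
    and morph_GJ_zero: "f (rzero V) = rzero W"
    and morph_GJ_act: "a \<in> hatGJ M e \<Longrightarrow> v \<in> rcar V \<Longrightarrow> f (ract V a v) = ract W a (f v)"
  using assms vect_morph_closed vect_morph_zero unfolding morph_GJ_def by fastforce+

lemma morph_GJI:
  assumes "\<And>v. v \<in> rcar V \<Longrightarrow> f v \<in> rcar W" "f (rzero V) = rzero W" "inj_on f (rcar V)"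
    and act: "\<And>a v. a \<in> hatGJ M e \<Longrightarrow> v \<in> rcar V \<Longrightarrow> f (ract V a v) = ract W a (f v)"
  shows "morph_GJ M e V W f"
  unfolding morph_GJ_def
proof
  show "vect_morph M (scal M e V) (scal M e W) f"
    using assms act[OF GJ_in_hatGJ[OF G_e_in_GJ]] by (intro vect_morphI) simp_all
qed (use act in blast)

lemma iso_GJ_sym: "iso_GJ M e V W \<Longrightarrow> iso_GJ M e W V"
  unfolding iso_GJ_def by blast

lemma morph_GJ_comp:
  assumes h1: "morph_GJ M e X Y h1" and h2: "morph_GJ M e Y Z h2"
    and inj1: "inj_on h1 (rcar X)" and inj2: "inj_on h2 (rcar Y)"
  shows "morph_GJ M e X Z (h2 \<circ> h1)"
proof (rule morph_GJI)
  show "(h2 \<circ> h1) v \<in> rcar Z" if "v \<in> rcar X" for v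
    using that morph_GJ_closed[OF h1] morph_GJ_closed[OF h2] by simp
  show "(h2 \<circ> h1) (rzero X) = rzero Z" using morph_GJ_zero[OF h1] morph_GJ_zero[OF h2] by simp
  have "h1 ` rcar X \<subseteq> rcar Y" using morph_GJ_closed[OF h1] by blast
  then show "inj_on (h2 \<circ> h1) (rcar X)" using comp_inj_on[OF inj1] inj_on_subset[OF inj2] by blast
  show "(h2 \<circ> h1) (ract X a v) = ract Z a ((h2 \<circ> h1) v)" if "a \<in> hatGJ M e" "v \<in> rcar X" for a v
    using that morph_GJ_act[OF h1] morph_GJ_act[OF h2] morph_GJ_closed[OF h1] by simp
qed

lemma iso_GJ_trans:
  assumes "iso_GJ M e U V" and "iso_GJ M e V W" shows "iso_GJ M e U W"
proof -
  obtain f1 g1 where 1: "morph_GJ M e U V f1" "morph_GJ M e V U g1"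
    "\<forall>v\<in>rcar U. g1 (f1 v) = v" "\<forall>w\<in>rcar V. f1 (g1 w) = w"
    using assms(1) unfolding iso_GJ_def by blast
  obtain f2 g2 where 2: "morph_GJ M e V W f2" "morph_GJ M e W V g2"
    "\<forall>v\<in>rcar V. g2 (f2 v) = v" "\<forall>w\<in>rcar W. f2 (g2 w) = w"
    using assms(2) unfolding iso_GJ_def by blast
  have inj: "inj_on f1 (rcar U)" "inj_on f2 (rcar V)" "inj_on g1 (rcar V)" "inj_on g2 (rcar W)"
    using 1(3,4) 2(3,4) by (metis inj_on_inverseI)+
  have "morph_GJ M e U W (f2 \<circ> f1)" "morph_GJ M e W U (g1 \<circ> g2)"
    using morph_GJ_comp[OF 1(1) 2(1) inj(1,2)] morph_GJ_comp[OF 2(2) 1(2) inj(4,3)] by blast+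
  moreover have "\<forall>v\<in>rcar U. (g1 \<circ> g2) ((f2 \<circ> f1) v) = v" "\<forall>w\<in>rcar W. (f2 \<circ> f1) ((g1 \<circ> g2) w) = w"
    using 1(3,4) 2(3,4) morph_GJ_closed[OF 1(1)] morph_GJ_closed[OF 2(2)] by simp_all
  ultimately show ?thesis unfolding iso_GJ_def by blast
qed

lemma iso_GJ_refl: "iso_GJ M e W W"
proof -
  have "morph_GJ M e W W id" by (rule morph_GJI) auto
  then show ?thesis unfolding iso_GJ_def by (intro exI[of _ id]) auto
qed

lemma iso_GJ_bij:
  assumes V: "rep_GJ M e V" and f: "morph_GJ M e V W f" and b: "bij_betw f (rcar V) (rcar W)"
  shows "iso_GJ M e V W"
proof -
  define g where "g = inv_into (rcar V) f"
  have gW: "g w \<in> rcar V" and fg: "f (g w) = w" if "w \<in> rcar W" for w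
    using that b unfolding g_def by (metis bij_betw_def inv_into_into, metis bij_betw_def f_inv_into_f)
  have gf: "g (f v) = v" if "v \<in> rcar V" for v
    using that b unfolding g_def by (simp add: bij_betw_def)
  have "morph_GJ M e W V g"
  proof (rule morph_GJI)
    show "g (rzero W) = rzero V" using gf[OF rep_GJ_zero_in[OF V]] morph_GJ_zero[OF f] by simp
    show "inj_on g (rcar W)" using fg by (metis inj_onI)
    show "g (ract W a w) = ract V a (g w)" if "a \<in> hatGJ M e" "w \<in> rcar W" for a w
      using gf[OF rep_GJ_closed[OF V that(1) gW[OF that(2)]]] morph_GJ_act[OF f that(1) gW[OF that(2)]]
        fg[OF that(2)] by simp
  qed (rule gW)
  then show ?thesis unfolding iso_GJ_def using f gf fg by blast
qed

lemma morph_res: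
  assumes X: "rep_M M X" and h: "morph_M M X Y h" and inj: "inj_on h (rcar X)"
  shows "morph_GJ M e (res M e X) (res M e Y) h"
proof (rule morph_GJI)
  have hv: "vect_morph M X Y h" using h unfolding morph_M_def by blast
  note hX = vect_morph_closed[OF hv]
  have hm: "h (ract X m v) = ract Y m (h v)" if "m \<in> Mc" "v \<in> rcar X" for m v
    using h that unfolding morph_M_def by blast
  show "h v \<in> rcar (res M e Y)" if "v \<in> rcar (res M e X)" for v
    using that hm hX by auto
  show "h (rzero (res M e X)) = rzero (res M e Y)" using vect_morph_zero[OF hv] by simp
  show "inj_on h (rcar (res M e X))" using inj_on_subset[OF inj] rep_M_closed[OF X e_closed] by (simp add: image_subset_iff)
  show "h (ract (res M e X) a v) = ract (res M e Y) a (h v)" if "a \<in> hatGJ M e" "v \<in> rcar (res M e X)" for a v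
    using that hm hatGJ_props rep_M_closed[OF X e_closed] by auto
qed

lemma iso_M_res:
  assumes V: "rep_M M V" and W: "rep_M M W" and iso: "iso_M M V W"
  shows "iso_GJ M e (res M e V) (res M e W)"
proof -
  obtain f g where fg: "morph_M M V W f" "morph_M M W V g" "\<forall>v\<in>rcar V. g (f v) = v" "\<forall>w\<in>rcar W. f (g w) = w"
    using iso unfolding iso_M_def by blast
  have "inj_on f (rcar V)" "inj_on g (rcar W)" using fg(3,4) by (metis inj_on_inverseI)+
  then have "morph_GJ M e (res M e V) (res M e W) f" "morph_GJ M e (res M e W) (res M e V) g"
    using morph_res[OF V fg(1)] morph_res[OF W fg(2)] by blast+
  moreover have "\<forall>v\<in>rcar (res M e V). g (f v) = v" "\<forall>w\<in>rcar (res M e W). f (g w) = w"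
    using fg(3,4) rep_M_closed[OF V e_closed] rep_M_closed[OF W e_closed] by auto
  ultimately show ?thesis unfolding iso_GJ_def by blast
qed

context
  fixes W :: "('m, 'w) obj"
  assumes W: "rep_GJ M e W"
begin

lemma tensor_e_in_Nset_eq_zero:
  "w \<in> rcar W \<Longrightarrow> tensor W e w \<in> Nset M e (ind M e W) \<Longrightarrow> tensor W e w = rzero (ind M e W)"
  using tensor_e_notin_Nset[OF W] tensor_e_eq_zero_iff[OF W] by blast

lemma Qrep_act_tensor_e:
  assumes a: "a \<in> hatGJ M e" and w: "w \<in> rcar W"
  shows "ract (Qrep M e W) a (tensor W e w) = tensor W e (ract W a w)"
proof (cases "a = \<zero>")
  case True
  have "tensor W e (ract W a w) = rzero (ind M e W)"
    using True rep_GJ_mzero[OF W w] tensor_e_eq_zero_iff[OF W rep_GJ_zero_in[OF W]] by simp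
  then show ?thesis using True ind_act_mzero[OF W tensor_in_ind[OF W L_subset_PeE[OF e_in_L] w]]
    by (simp add: Qrep_simps)
next
  case False
  then have "a \<in> GJ M e" using a hatGJ_iff by blast
  then show ?thesis using GJ_act_tensor_e[OF W _ w] tensor_e_in_Nset_eq_zero rep_GJ_closed[OF W a w]
    by (simp add: Qrep_simps)
qed

lemma ind_act_e_in_tensor_e_image:
  assumes c: "c \<in> rcar (ind M e W)"
  shows "ract (ind M e W) e c \<in> tensor W e ` rcar W"
proof -
  obtain x v where xv: "x \<in> PeE M e" "v \<in> rcar W" "c = tensor W x v" using ind_cases[OF W c] by blast
  have ec: "ract (ind M e W) e c = tensor W (e \<triangleright> x) v" using ind_act_tensor[OF W e_closed xv(1,2)] xv(3) by simp
  show ?thesis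
  proof (cases "e \<triangleright> x = \<zero>")
    case True
    then have "ract (ind M e W) e c = tensor W e (rzero W)"
      using ec tensor_eq_zero_iff[OF W zero_in_PeE xv(2)] tensor_e_eq_zero_iff[OF W rep_GJ_zero_in[OF W]] by simp
    then show ?thesis using rep_GJ_zero_in[OF W] by blast
  next
    case False
    then have yL: "e \<triangleright> x \<in> L" using actP_closed[OF e_closed xv(1)] PeE_nonzero by blast
    have "e \<cdot> (e \<triangleright> x) = e \<triangleright> x" using actP_nonzeroD[OF False] xv(1) PeE_closed by simp
    then have yG: "e \<triangleright> x \<in> GJ M e" using yL GJ_iff L_def by simp
    have "ract (ind M e W) e c = tensor W e (ract W (e \<triangleright> x) v)"
      using ec L_actP_tensor_e[OF W yL xv(2)] GJ_act_tensor_e[OF W yG xv(2)] by simp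
    then show ?thesis using rep_GJ_closed[OF W GJ_in_hatGJ[OF yG] xv(2)] by blast
  qed
qed

lemma res_Qrep_carrier: "rcar (res M e (Qrep M e W)) = tensor W e ` rcar W"
proof
  show "tensor W e ` rcar W \<subseteq> rcar (res M e (Qrep M e W))"
    using tensor_e_in_Qrep[OF W] Qrep_act_tensor_e[OF GJ_in_hatGJ[OF e_in_GJ]] rep_GJ_e[OF W]
    by (auto intro!: image_eqI)
  show "rcar (res M e (Qrep M e W)) \<subseteq> tensor W e ` rcar W"
  proof
    fix r assume "r \<in> rcar (res M e (Qrep M e W))"
    then obtain c where c: "c \<in> rcar (Qrep M e W)" "r = ract (Qrep M e W) e c" by auto
    have "tensor W e (rzero W) = rzero (ind M e W)"
      using tensor_e_eq_zero_iff[OF W rep_GJ_zero_in[OF W]] by simp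
    then have "rzero (ind M e W) \<in> tensor W e ` rcar W" using rep_GJ_zero_in[OF W] by (metis imageI)
    then show "r \<in> tensor W e ` rcar W"
      using c ind_act_e_in_tensor_e_image Qrep_carrier_subset[OF W] by (auto simp: Qrep_simps)
  qed
qed

lemma tensor_e_inj: "inj_on (tensor W e) (rcar W)"
proof (rule inj_onI)
  fix w w' assume w: "w \<in> rcar W" "w' \<in> rcar W" "tensor W e w = tensor W e w'"
  show "w = w'"
  proof (cases "w = rzero W \<or> w' = rzero W")
    case True then show ?thesis using w tensor_e_eq_zero_iff[OF W] by metis
  next
    case False
    have r: "((e, w), (e, w')) \<in> tensor_rel W"
      using w tensor_eq_iff[OF W L_subset_PeE[OF e_in_L] L_subset_PeE[OF e_in_L]] by simp
    obtain a where "a \<in> GJ M e" "e = e \<cdot> a" "w = ract W a w'"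
      using tensor_rel_nonzeroE[OF r] False e_nonzero by blast
    then show ?thesis using GJ_e_left rep_GJ_e[OF W w(2)] by simp
  qed
qed

lemma res_Qrep_iso: "iso_GJ M e (res M e (Qrep M e W)) W"
proof -
  have "morph_GJ M e W (res M e (Qrep M e W)) (tensor W e)"
  proof (rule morph_GJI)
    show "tensor W e (rzero W) = rzero (res M e (Qrep M e W))"
      using tensor_e_eq_zero_iff[OF W rep_GJ_zero_in[OF W]] by (simp add: Qrep_simps)
  qed (use res_Qrep_carrier tensor_e_inj Qrep_act_tensor_e in auto)
  then show ?thesis
    using iso_GJ_sym iso_GJ_bij[OF W] tensor_e_inj res_Qrep_carrier unfolding bij_betw_def by blast
qed

end

context
  fixes V :: "('m, 'v) obj"
  assumes V: "rep_M M V"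
begin

lemma res_carrier_subset: "rcar (res M e V) \<subseteq> rcar V"
  using rep_M_closed[OF V e_closed] by auto

lemma res_e_fixed: "w \<in> rcar (res M e V) \<Longrightarrow> ract V e w = w"
  using rep_M_mult[OF V e_closed e_closed] by auto

lemma res_closed:
  assumes a: "a \<in> Mc" "e \<cdot> a = a" and w: "w \<in> rcar (res M e V)"
  shows "ract V a w \<in> rcar (res M e V)"
proof -
  have wV: "w \<in> rcar V" using w res_carrier_subset by blast
  have "ract V a w = ract V e (ract V a w)" using rep_M_mult[OF V e_closed a(1) wV] a(2) by simp
  then show ?thesis using rep_M_closed[OF V a(1) wV] by auto
qed

lemma res_scalar_act:
  assumes g: "g \<in> G" and w: "w \<in> rcar (res M e V)" shows "ract V (g \<cdot> e) w = ract V g w"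
  using rep_M_mult[OF V G_closed[OF g] e_closed] res_e_fixed[OF w] res_carrier_subset w by auto

lemma res_G_e_closed: "g \<in> G \<Longrightarrow> w \<in> rcar (res M e V) \<Longrightarrow> ract V (g \<cdot> e) w \<in> rcar (res M e V)"
  by (rule res_closed[OF GJ_closed[OF G_e_in_GJ] GJ_e_left[OF G_e_in_GJ]])

lemma res_vect_obj: "vect_obj M (scal M e (res M e V))"
proof (rule vect_objI)
  let ?W = "scal M e (res M e V)"
  show "finite (rcar ?W)" using rep_M_finite[OF V] by simp
  show "rzero ?W \<in> rcar ?W"
    using image_eqI[where f = "ract V e", OF rep_M_zero_fixed[OF V e_closed, symmetric] rep_M_zero_in[OF V]] by simp
  show "ract ?W g w \<in> rcar ?W" if "g \<in> G" "w \<in> rcar ?W" for g w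
    using res_G_e_closed that by simp
  show "ract ?W \<one> w = w" if "w \<in> rcar ?W" for w
    using res_e_fixed[of w] that by (simp del: res_simps(1))
  show "ract ?W (g \<cdot> h) w = ract ?W g (ract ?W h w)" if g: "g \<in> G" and h: "h \<in> G" and w: "w \<in> rcar ?W" for g h w
  proof -
    have w': "w \<in> rcar (res M e V)" using w by simp
    have hw: "ract V h w \<in> rcar (res M e V)" using res_G_e_closed[OF h w'] res_scalar_act[OF h w'] by simp
    have wV: "w \<in> rcar V" using w' res_carrier_subset by blast
    have "ract V (g \<cdot> h \<cdot> e) w = ract V g (ract V h w)"
      using res_scalar_act[OF G_mult_closed[OF g h] w'] rep_M_mult[OF V G_closed[OF g] G_closed[OF h] wV] by simp
    then show ?thesis using res_scalar_act[OF h w'] res_scalar_act[OF g hw] by simp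
  qed
  show "ract ?W g (rzero ?W) = rzero ?W" if "g \<in> G" for g
    using rep_M_zero_fixed[OF V mult_closed[OF G_closed[OF that] e_closed]] by simp
  show "g = \<one>" if g: "g \<in> G" and w: "w \<in> rcar ?W" "w \<noteq> rzero ?W" "ract ?W g w = w" for g w
  proof -
    have w': "w \<in> rcar (res M e V)" using w(1) by simp
    have wV: "w \<in> rcar V" using w' res_carrier_subset by blast
    have "ract V g w = w" using res_scalar_act[OF g w'] w(3) by simp
    then show ?thesis using rep_M_free[OF V g wV] w(2) by simp
  qed
qed

lemma orbit_res:
  assumes w: "w \<in> rcar (res M e V)" shows "orbit M (scal M e (res M e V)) w = orbit M V w"
  unfolding orbit_def using res_scalar_act[OF _ w] by simp

lemma res_vect_morph:
  assumes a: "a \<in> hatGJ M e"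
  shows "vect_morph M (scal M e (res M e V)) (scal M e (res M e V)) (ract V a)"
  unfolding vect_morph_def
proof (intro conjI ballI impI)
  let ?W = "scal M e (res M e V)"
  note ap = hatGJ_props[OF a]
  have aw: "ract V a w \<in> rcar (res M e V)" if "w \<in> rcar (res M e V)" for w
    using res_closed[OF _ _ that] ap by blast
  show "ract V a w \<in> rcar ?W" if "w \<in> rcar ?W" for w
    using aw[of w] that by (simp del: res_simps(1))
  show "ract V a (rzero ?W) = rzero ?W"
    using rep_M_zero_fixed[OF V] ap by simp
  show "ract V a (ract ?W g w) = ract ?W g (ract V a w)" if g: "g \<in> G" and w: "w \<in> rcar ?W" for g w
  proof -
    have w': "w \<in> rcar (res M e V)" using w by (simp del: res_simps(1))
    have "ract V a (ract V g w) = ract V g (ract V a w)"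
      using action_G_commute[where f = "ract V" and A = "rcar V", OF rep_M_mult[OF V] _ g] ap
        res_carrier_subset w' by blast
    then show ?thesis using res_scalar_act[OF g w'] res_scalar_act[OF g aw[OF w']] by simp
  qed
  show "orbit M ?W v1 = orbit M ?W v2"
    if v: "v1 \<in> rcar ?W" "v2 \<in> rcar ?W" and eq: "ract V a v1 = ract V a v2 \<and> ract V a v1 \<noteq> rzero ?W" for v1 v2
  proof -
    have v': "v1 \<in> rcar (res M e V)" "v2 \<in> rcar (res M e V)" using v by (simp_all del: res_simps(1))
    then have vV: "v1 \<in> rcar V" "v2 \<in> rcar V" using res_carrier_subset by blast+
    then have "orbit M V v1 = orbit M V v2" using rep_M_orbit[OF V conjunct1[OF ap] vV] eq by force
    then show ?thesis using orbit_res v' by simp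
  qed
qed

lemma res_rep_GJ: "rep_GJ M e (res M e V)"
  unfolding rep_GJ_def
proof (intro conjI ballI)
  show "vect_obj M (scal M e (res M e V))" by (rule res_vect_obj)
  show "vect_morph M (scal M e (res M e V)) (scal M e (res M e V)) (ract (res M e V) a)"
    if "a \<in> hatGJ M e" for a using res_vect_morph[OF that] by simp
  show "ract (res M e V) (a \<cdot> b) w = ract (res M e V) a (ract (res M e V) b w)"
    if "a \<in> hatGJ M e" "b \<in> hatGJ M e" "w \<in> rcar (res M e V)" for a b w
  proof -
    have "w \<in> rcar V" using that(3) res_carrier_subset by blast
    then show ?thesis
      using rep_M_mult[OF V conjunct1[OF hatGJ_props[OF that(1)]] conjunct1[OF hatGJ_props[OF that(2)]]] by simp
  qed
  show "ract (res M e V) e w = w" if "w \<in> rcar (res M e V)" for w using res_e_fixed[OF that] by simp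
  show "ract (res M e V) \<zero> w = rzero (res M e V)" if "w \<in> rcar (res M e V)" for w
    using rep_M_mzero[OF V] that res_carrier_subset by (simp add: subset_iff del: res_simps(1))
qed

end

section \<open>Simple representations with apex \<open>J\<close>\<close>

context
  fixes V :: "('m, 'v) obj"
  assumes apex: "Ann M V = IJ M J"
begin

lemma apex_act_zero: "x \<in> Mc \<Longrightarrow> e \<notin> Jideal M x \<Longrightarrow> v \<in> rcar V \<Longrightarrow> ract V x v = rzero V"
  using apex IJ_iff unfolding Ann_def by blast

lemma apex_act_below_J_zero:
  "x \<in> Mc \<Longrightarrow> x \<in> Jideal M e \<Longrightarrow> x \<notin> J \<Longrightarrow> v \<in> rcar V \<Longrightarrow> ract V x v = rzero V"
  using apex_act_zero notin_J_below by blast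

lemma apex_e_nonzero: obtains v where "v \<in> rcar V" "ract V e v \<noteq> rzero V"
proof -
  have "e \<notin> Ann M V" using apex IJ_iff Jideal_self[OF e_closed] by simp
  then show ?thesis using that unfolding Ann_def by auto
qed

text \<open>Since \<open>V\<close> is cyclic on any nonzero vector, \<open>u = e m w = (e m e) w\<close> for \<open>w, u \<in> eV\<close>;
  either \<open>e m e \<in> G\<^sub>J\<close>, or \<open>e m e\<close> lies strictly below \<open>J\<close> and annihilates \<open>V\<close>.\<close>

lemma res_cyclic:
  assumes sV: "simple_M M V" and w: "w \<in> rcar (res M e V)" "w \<noteq> rzero V" and u: "u \<in> rcar (res M e V)"
  obtains a where "a \<in> hatGJ M e" "u = ract V a w"
proof -
  note V = simple_M_rep[OF sV]
  have wV: "w \<in> rcar V" using w(1) res_carrier_subset[OF V] by blast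
  obtain u' where u': "u' \<in> rcar V" "u = ract V e u'" using u by auto
  obtain m where m: "m \<in> Mc" "u' = ract V m w" using simple_M_cyclic[OF sV wV w(2) u'(1)] by blast
  define b where "b = e \<cdot> m \<cdot> e"
  have bC: "b \<in> Mc" using m b_def by simp
  have "u = ract V (e \<cdot> m) w" using u' m rep_M_mult[OF V e_closed m(1) wV] by simp
  also have "\<dots> = ract V (e \<cdot> m) (ract V e w)" using res_e_fixed[OF V w(1)] by simp
  also have "\<dots> = ract V b w" using rep_M_mult[OF V mult_closed[OF e_closed m(1)] e_closed wV] b_def by simp
  finally have ub: "u = ract V b w" .
  show ?thesis
  proof (cases "b \<in> J")
    case True
    have "e \<cdot> b = b" "b \<cdot> e = b" unfolding b_def using m by (simp_all add: mult_assoc)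
    then have "b \<in> hatGJ M e" using True GJ_iff hatGJ_iff by simp
    then show ?thesis using that ub by blast
  next
    case False
    have "b \<in> Jideal M e" unfolding b_def using Jideal_mult[of "e \<cdot> m" e \<one>] m by (simp add: mult_assoc)
    then have "u = ract V \<zero> w" using ub apex_act_below_J_zero[OF bC _ False wV] rep_M_mzero[OF V wV] by simp
    then show ?thesis using that hatGJ_iff by blast
  qed
qed

lemma res_simple:
  assumes sV: "simple_M M V" shows "simple_GJ M e (res M e V)"
proof -
  note V = simple_M_rep[OF sV]
  let ?W = "res M e V"
  obtain v0 where "v0 \<in> rcar V" "ract V e v0 \<noteq> rzero V" using apex_e_nonzero by blast
  then have ne: "rcar ?W \<noteq> {rzero ?W}" by auto
  have "S = {rzero ?W} \<or> S = rcar ?W" if S: "subrep_GJ M e ?W S" for S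
  proof (cases "S \<subseteq> {rzero ?W}")
    case True
    then show ?thesis using S unfolding subrep_GJ_def by blast
  next
    case False
    then obtain w where w: "w \<in> S" "w \<noteq> rzero V" by auto
    have SW: "S \<subseteq> rcar ?W" and Scl: "\<And>a w. a \<in> hatGJ M e \<Longrightarrow> w \<in> S \<Longrightarrow> ract V a w \<in> S"
      using S unfolding subrep_GJ_def by auto
    have "rcar ?W \<subseteq> S"
    proof
      fix u assume "u \<in> rcar ?W"
      then obtain a where "a \<in> hatGJ M e" "u = ract V a w" using res_cyclic[OF sV _ w(2)] w(1) SW by blast
      then show "u \<in> S" using Scl w(1) by blast
    qed
    then show ?thesis using SW by blast
  qed
  then show ?thesis unfolding simple_GJ_def using res_rep_GJ[OF V] ne by blast
qed

end

end

locale restriction_iso = principal_idempotent M e for M :: "'m lmonoid" and e +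
  fixes V :: "('m, 'v) obj" and W :: "('m, 'w) obj" and \<phi> :: "'w \<Rightarrow> 'v"
  assumes simple_V: "simple_M M V" and apex_V: "has_apex M V (Jclass M e)"
    and rep_W: "rep_GJ M e W" and morph_\<phi>: "morph_GJ M e W (res M e V) \<phi>"
    and bij_\<phi>: "bij_betw \<phi> (rcar W) (rcar (res M e V))"
begin

lemma rep_V: "rep_M M V"
  using simple_M_rep[OF simple_V] .

lemma apex: "Ann M V = IJ M J"
  using apex_V unfolding has_apex_def J_def by blast

lemma \<phi>_res: "w \<in> rcar W \<Longrightarrow> \<phi> w \<in> rcar (res M e V)"
  using morph_GJ_closed[OF morph_\<phi>] .

lemma \<phi>_closed: "w \<in> rcar W \<Longrightarrow> \<phi> w \<in> rcar V"
  using \<phi>_res res_carrier_subset[OF rep_V] by blast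

lemma \<phi>_e_fixed: "w \<in> rcar W \<Longrightarrow> ract V e (\<phi> w) = \<phi> w"
  using res_e_fixed[OF rep_V \<phi>_res] .

lemma \<phi>_zero: "\<phi> (rzero W) = rzero V"
  using morph_GJ_zero[OF morph_\<phi>] by simp

lemma \<phi>_act: "a \<in> hatGJ M e \<Longrightarrow> w \<in> rcar W \<Longrightarrow> \<phi> (ract W a w) = ract V a (\<phi> w)"
  using morph_GJ_act[OF morph_\<phi>] by simp

lemma \<phi>_nonzero: "w \<in> rcar W \<Longrightarrow> w \<noteq> rzero W \<Longrightarrow> \<phi> w \<noteq> rzero V"
  using bij_\<phi> \<phi>_zero rep_GJ_zero_in[OF rep_W] unfolding bij_betw_def inj_on_def by metis

lemma \<phi>_respects_tensor_rel:
  assumes r: "((x, w), (y, v)) \<in> tensor_rel W"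
  shows "ract V x (\<phi> w) = ract V y (\<phi> v)"
proof -
  note mem = tensor_rel_dom[OF r]
  have zero: "ract V x' (\<phi> w') = rzero V" if "x' \<in> PeE M e" "w' \<in> rcar W" "x' = \<zero> \<or> w' = rzero W" for x' w'
    using that rep_M_mzero[OF rep_V \<phi>_closed] rep_M_zero_fixed[OF rep_V PeE_closed] \<phi>_zero by auto
  show ?thesis
  proof (cases "(x = \<zero> \<or> w = rzero W) \<and> (y = \<zero> \<or> v = rzero W)")
    case False
    then obtain a where a: "a \<in> GJ M e" "y = x \<cdot> a" "w = ract W a v" using tensor_rel_nonzeroE[OF r] by blast
    then show ?thesis
      using rep_M_mult[OF rep_V PeE_closed[OF conjunct1[OF mem]] GJ_closed[OF a(1)] \<phi>_closed] \<phi>_act[OF GJ_in_hatGJ[OF a(1)]] mem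
      by simp
  qed (use zero mem in simp)
qed

definition tensor_map :: "('m \<times> 'w) set \<Rightarrow> 'v" where
  "tensor_map c = the_elem ((\<lambda>(x, w). ract V x (\<phi> w)) ` c)"

lemma tensor_map_tensor:
  assumes x: "x \<in> PeE M e" and w: "w \<in> rcar W"
  shows "tensor_map (tensor W x w) = ract V x (\<phi> w)"
  unfolding tensor_map_def
proof (rule the_elem_image_unique)
  show "tensor W x w \<noteq> {}" using tensor_rel_refl[OF rep_W x w] unfolding tensor_def by blast
  show "(case p of (y, v) \<Rightarrow> ract V y (\<phi> v)) = ract V x (\<phi> w)" if "p \<in> tensor W x w" for p
    using that \<phi>_respects_tensor_rel unfolding tensor_def by (cases p) auto
qed

lemma tensor_map_closed: "c \<in> rcar (ind M e W) \<Longrightarrow> tensor_map c \<in> rcar V"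
  by (erule ind_cases[OF rep_W]) (simp add: tensor_map_tensor rep_M_closed[OF rep_V PeE_closed \<phi>_closed])

lemma tensor_map_zero: "tensor_map (rzero (ind M e W)) = rzero V"
  using tensor_map_tensor[OF zero_in_PeE rep_GJ_zero_in[OF rep_W]] rep_M_mzero[OF rep_V \<phi>_closed[OF rep_GJ_zero_in[OF rep_W]]]
  by (simp add: ind_simps[OF rep_W])

lemma tensor_map_act:
  assumes m: "m \<in> Mc" and c: "c \<in> rcar (ind M e W)"
  shows "tensor_map (ract (ind M e W) m c) = ract V m (tensor_map c)"
proof -
  obtain x w where xw: "x \<in> PeE M e" "w \<in> rcar W" "c = tensor W x w" using ind_cases[OF rep_W c] by blast
  note xC = PeE_closed[OF xw(1)]
  have lhs: "tensor_map (ract (ind M e W) m c) = ract V (m \<triangleright> x) (\<phi> w)"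
    using ind_act_tensor[OF rep_W m xw(1,2)] xw(3) tensor_map_tensor[OF actP_closed[OF m xw(1)] xw(2)] by simp
  have rhs: "ract V m (tensor_map c) = ract V (m \<cdot> x) (\<phi> w)"
    using tensor_map_tensor[OF xw(1,2)] xw(3) rep_M_mult[OF rep_V m xC \<phi>_closed[OF xw(2)]] by simp
  show ?thesis
  proof (cases "m \<cdot> x \<in> J")
    case False
    have "m \<cdot> x \<in> Jideal M e"
    proof (cases "x = \<zero>")
      case True then show ?thesis using m Jideal_mult[of \<zero> e \<zero>] by simp
    next
      case False then have "x \<in> J" using xw(1) PeE_nonzero L_def by auto
      then show ?thesis using J_iff Jideal_trans Jideal_mult_left[OF m xC] by (meson mult_closed e_closed m xC)
    qed
    then have "ract V (m \<cdot> x) (\<phi> w) = rzero V"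
      using apex_act_below_J_zero[OF apex _ _ False \<phi>_closed[OF xw(2)]] m xC by simp
    then show ?thesis using lhs rhs False rep_M_mzero[OF rep_V \<phi>_closed[OF xw(2)]] by (simp add: pmul_eq)
  qed (use lhs rhs in \<open>simp add: pmul_eq\<close>)
qed

lemma tensor_map_Nset:
  assumes c: "c \<in> Nset M e (ind M e W)" shows "tensor_map c = rzero V"
proof (rule ccontr)
  assume nz: "tensor_map c \<noteq> rzero V"
  have cI: "c \<in> rcar (ind M e W)" using c unfolding Nset_def by simp
  obtain v0 where v0: "v0 \<in> rcar V" "ract V e v0 \<noteq> rzero V" using apex_e_nonzero[OF apex] by blast
  obtain m where m: "m \<in> Mc" "v0 = ract V m (tensor_map c)"
    using simple_M_cyclic[OF simple_V tensor_map_closed[OF cI] nz v0(1)] by blast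
  have "ract V e v0 = tensor_map (ract (ind M e W) (e \<cdot> m) c)"
    using m rep_M_mult[OF rep_V e_closed m(1) tensor_map_closed[OF cI]] tensor_map_act[OF _ cI] by simp
  also have "\<dots> = rzero V" using c m tensor_map_zero unfolding Nset_def by simp
  finally show False using v0 by simp
qed

lemma tensor_map_Qrep_act:
  assumes m: "m \<in> Mc" and c: "c \<in> rcar (Qrep M e W)"
  shows "tensor_map (ract (Qrep M e W) m c) = ract V m (tensor_map c)"
proof -
  have cI: "c \<in> rcar (ind M e W)" using c Qrep_carrier_subset[OF rep_W] by blast
  show ?thesis
  proof (cases "ract (ind M e W) m c \<in> Nset M e (ind M e W)")
    case True
    then have "ract V m (tensor_map c) = rzero V" using tensor_map_act[OF m cI] tensor_map_Nset by simp
    then show ?thesis using True tensor_map_zero by (simp add: Qrep_simps)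
  qed (use tensor_map_act[OF m cI] in \<open>simp add: Qrep_simps\<close>)
qed

lemma tensor_map_Qrep_nonzero:
  assumes c: "c \<in> rcar (Qrep M e W)" "c \<noteq> rzero (ind M e W)"
  shows "tensor_map c \<noteq> rzero V"
proof
  assume z: "tensor_map c = rzero V"
  have "c \<in> rcar (ind M e W)" "c \<notin> Nset M e (ind M e W)" using c by (auto simp: Qrep_simps)
  then obtain m w where m: "m \<in> Mc" and w: "w \<in> rcar W" "w \<noteq> rzero W"
    and mc: "ract (ind M e W) m c = tensor W e w"
    using outside_Nset_reaches_tensor_e[OF rep_W] by blast
  have "\<phi> w = tensor_map (ract (ind M e W) m c)"
    using mc tensor_map_tensor[OF L_subset_PeE[OF e_in_L] w(1)] \<phi>_e_fixed[OF w(1)] by simp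
  also have "\<dots> = rzero V"
    using tensor_map_act[OF m] c z rep_M_zero_fixed[OF rep_V m] Qrep_carrier_subset[OF rep_W] by auto
  finally show False using \<phi>_nonzero[OF w] by simp
qed

text \<open>Cancel \<open>x\<close> by \<open>u' = e u\<close> with \<open>u x = e\<close>: then \<open>\<alpha> = u' y\<close> satisfies \<open>\<alpha> \<phi>(v) = \<phi>(w) \<noteq> 0\<close>,
  so \<open>\<alpha> \<in> G\<^sub>J\<close>, \<open>\<alpha> v = w\<close>, and left inductivity gives \<open>y = g x \<alpha>\<close> for some \<open>g \<in> G\<close>.\<close>

lemma tensor_map_eq_imp_G_translate:
  assumes xL: "x \<in> L" and yL: "y \<in> L" and w: "w \<in> rcar W" "w \<noteq> rzero W" and v: "v \<in> rcar W"
    and eq: "ract V x (\<phi> w) = ract V y (\<phi> v)"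
  obtains g where "g \<in> G" "tensor W y v = ract (ind M e W) g (tensor W x w)"
proof -
  note xC = L_closed[OF xL] L_closed[OF yL]
  obtain u where u: "u \<in> Mc" "u \<cdot> x = e" using J_left_unit xL L_def by blast
  define u' where "u' = e \<cdot> u"
  have u'C: "u' \<in> Mc" using u u'_def by simp
  have u'x: "u' \<cdot> x = e" unfolding u'_def using u xC by (simp add: mult_assoc)
  define \<alpha> where "\<alpha> = u' \<cdot> y"
  have \<alpha>C: "\<alpha> \<in> Mc" using u'C xC \<alpha>_def by simp
  have "ract V \<alpha> (\<phi> v) = ract V u' (ract V x (\<phi> w))"
    unfolding \<alpha>_def using eq rep_M_mult[OF rep_V u'C xC(2) \<phi>_closed[OF v]] by simp
  also have "\<dots> = \<phi> w" using rep_M_mult[OF rep_V u'C xC(1) \<phi>_closed[OF w(1)]] u'x \<phi>_e_fixed[OF w(1)] by simp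
  finally have av: "ract V \<alpha> (\<phi> v) = \<phi> w" .
  have "e \<in> Jideal M \<alpha>"
    using apex_act_zero[OF apex \<alpha>C _ \<phi>_closed[OF v]] av \<phi>_nonzero[OF w] by auto
  moreover have "\<alpha> \<in> Jideal M e"
    using Jideal_trans[OF e_closed _ Jideal_mult_left[OF u'C xC(2)]] yL J_iff L_def unfolding \<alpha>_def by blast
  moreover have "e \<cdot> \<alpha> = \<alpha>" "\<alpha> \<cdot> e = \<alpha>" unfolding \<alpha>_def u'_def using u xC yL L_def by (simp_all add: mult_assoc)
  ultimately have \<alpha>G: "\<alpha> \<in> GJ M e" using J_iff \<alpha>C GJ_iff by simp
  have xaL: "x \<cdot> \<alpha> \<in> L" using L_mult_GJ[OF xL \<alpha>G] .
  have "u' \<cdot> (x \<cdot> \<alpha>) = \<alpha>" using u'x xC \<alpha>C u'C GJ_e_left[OF \<alpha>G] by (simp flip: mult_assoc)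
  then have p1: "u' \<triangleright> (x \<cdot> \<alpha>) = \<alpha>" using GJ_in_J[OF \<alpha>G] by (simp add: pmul_eq)
  have p2: "u' \<triangleright> y = \<alpha>" unfolding \<alpha>_def using GJ_in_J[OF \<alpha>G] \<alpha>_def by (simp add: pmul_eq)
  have "u' \<triangleright> (x \<cdot> \<alpha>) \<noteq> \<zero>" using p1 GJ_in_J[OF \<alpha>G] zero_notin_J by metis
  then obtain g where g: "g \<in> G" "y = g \<cdot> (x \<cdot> \<alpha>)"
    using actP_eq_imp_G_orbit[OF u'C L_subset_PeE[OF xaL] L_subset_PeE[OF yL]] p1 p2 by metis
  have "\<phi> (ract W \<alpha> v) = \<phi> w" using \<phi>_act[OF GJ_in_hatGJ[OF \<alpha>G] v] av by simp
  then have wv: "ract W \<alpha> v = w"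
    using bij_\<phi> rep_GJ_closed[OF rep_W GJ_in_hatGJ[OF \<alpha>G] v] w(1) unfolding bij_betw_def inj_on_def by blast
  have "tensor W y v = tensor W (g \<triangleright> (x \<cdot> \<alpha>)) v" using g G_mult_L[OF xaL g(1)] L_def by (simp add: pmul_eq)
  also have "\<dots> = ract (ind M e W) g (tensor W (x \<cdot> \<alpha>) v)"
    using ind_act_tensor[OF rep_W G_closed[OF g(1)] L_subset_PeE[OF xaL] v] by simp
  also have "\<dots> = ract (ind M e W) g (tensor W x w)" using tensor_GJ_shift[OF rep_W xL \<alpha>G v] wv by simp
  finally show ?thesis using that g(1) by blast
qed

lemma tensor_map_inj: "inj_on tensor_map (rcar (Qrep M e W))"
proof (rule inj_onI)
  fix c1 c2 assume c1: "c1 \<in> rcar (Qrep M e W)" and c2: "c2 \<in> rcar (Qrep M e W)" and eq: "tensor_map c1 = tensor_map c2"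
  show "c1 = c2"
  proof (cases "tensor_map c1 = rzero V")
    case True
    then show ?thesis using tensor_map_Qrep_nonzero c1 c2 eq by metis
  next
    case False
    have n: "c1 \<noteq> rzero (ind M e W)" "c2 \<noteq> rzero (ind M e W)" using False eq tensor_map_zero by auto
    have cI: "c1 \<in> rcar (ind M e W)" "c2 \<in> rcar (ind M e W)" using c1 c2 Qrep_carrier_subset[OF rep_W] by auto
    obtain x w where xw: "x \<in> PeE M e" "w \<in> rcar W" "c1 = tensor W x w" using ind_cases[OF rep_W cI(1)] by blast
    obtain y v where yv: "y \<in> PeE M e" "v \<in> rcar W" "c2 = tensor W y v" using ind_cases[OF rep_W cI(2)] by blast
    have xL: "x \<in> L" and wnz: "w \<noteq> rzero W" using tensor_nonzeroD[OF rep_W xw(1,2)] n(1) xw(3) by auto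
    have yL: "y \<in> L" using tensor_nonzeroD[OF rep_W yv(1,2)] n(2) yv(3) by auto
    have "ract V x (\<phi> w) = ract V y (\<phi> v)" using eq xw yv tensor_map_tensor by simp
    then obtain g where g: "g \<in> G" "c2 = ract (ind M e W) g c1"
      using tensor_map_eq_imp_G_translate[OF xL yL xw(2) wnz yv(2)] xw(3) yv(3) by metis
    then have "ract V g (tensor_map c1) = tensor_map c1" using tensor_map_act[OF G_closed[OF g(1)] cI(1)] eq by simp
    then have "g = \<one>" using rep_M_free[OF rep_V g(1) tensor_map_closed[OF cI(1)] False] by simp
    then show ?thesis using g ind_act_unit[OF rep_W cI(1)] by simp
  qed
qed

lemma tensor_map_surj: "tensor_map ` rcar (Qrep M e W) = rcar V"
proof
  show "tensor_map ` rcar (Qrep M e W) \<subseteq> rcar V"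
    using tensor_map_closed Qrep_carrier_subset[OF rep_W] by blast
  show "rcar V \<subseteq> tensor_map ` rcar (Qrep M e W)"
  proof
    fix u assume u: "u \<in> rcar V"
    show "u \<in> tensor_map ` rcar (Qrep M e W)"
    proof (cases "u = rzero V")
      case True then show ?thesis using tensor_map_zero rep_M_zero_in[OF ind_rep[OF rep_W]] by (force simp: Qrep_simps)
    next
      case False
      obtain v0 where v0: "v0 \<in> rcar V" "ract V e v0 \<noteq> rzero V" using apex_e_nonzero[OF apex] by blast
      obtain w0 where w0: "w0 \<in> rcar W" "\<phi> w0 = ract V e v0" using bij_\<phi> v0(1) unfolding bij_betw_def by force
      obtain m where m: "m \<in> Mc" "u = ract V m (\<phi> w0)"
        using simple_M_cyclic[OF simple_V \<phi>_closed[OF w0(1)] _ u] w0(2) v0(2) by auto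
      have u2: "u = ract V (m \<cdot> e) (\<phi> w0)"
        using m rep_M_mult[OF rep_V m(1) e_closed \<phi>_closed[OF w0(1)]] \<phi>_e_fixed[OF w0(1)] by simp
      have "m \<cdot> e \<in> J"
        using apex_act_below_J_zero[OF apex _ Jideal_mult_left[OF m(1) e_closed] _ \<phi>_closed[OF w0(1)]] u2 m(1) False
        by auto
      then have meL: "m \<cdot> e \<in> L" unfolding L_def using m by (simp add: mult_assoc)
      define c where "c = tensor W (m \<cdot> e) w0"
      have Pc: "tensor_map c = u" unfolding c_def using tensor_map_tensor[OF L_subset_PeE[OF meL] w0(1)] u2 by simp
      then have "c \<notin> Nset M e (ind M e W)" using tensor_map_Nset False by auto
      then have "c \<in> rcar (Qrep M e W)"
        using tensor_in_ind[OF rep_W L_subset_PeE[OF meL] w0(1)] unfolding c_def by (simp add: Qrep_simps)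
      then show ?thesis using Pc by blast
    qed
  qed
qed

lemma Qrep_iso: "iso_M M (Qrep M e W) V"
proof (rule iso_M_bij[OF Qrep_rep[OF rep_W]])
  show "morph_M M (Qrep M e W) V tensor_map"
    unfolding morph_M_def
  proof
    show "vect_morph M (Qrep M e W) V tensor_map"
    proof (rule vect_morphI)
      show "tensor_map (rzero (Qrep M e W)) = rzero V" using tensor_map_zero by (simp add: Qrep_simps)
    qed (use tensor_map_surj tensor_map_Qrep_act[OF G_closed] tensor_map_inj in auto)
  qed (use tensor_map_Qrep_act in blast)
  show "bij_betw tensor_map (rcar (Qrep M e W)) (rcar V)"
    using tensor_map_inj tensor_map_surj unfolding bij_betw_def by blast
qed

end

context principal_idempotent
begin

lemma Qrep_iso_of_iso_res:
  assumes sV: "simple_M M V" and apex: "has_apex M V (Jclass M e)"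
    and W: "rep_GJ M e W" and iso: "iso_GJ M e W (res M e V)"
  shows "iso_M M (Qrep M e W) V"
proof -
  obtain f g where f: "morph_GJ M e W (res M e V) f" and g: "morph_GJ M e (res M e V) W g"
    and gf: "\<forall>w\<in>rcar W. g (f w) = w" and fg: "\<forall>u\<in>rcar (res M e V). f (g u) = u"
    using iso unfolding iso_GJ_def by blast
  have "bij_betw f (rcar W) (rcar (res M e V))"
    using gf fg morph_GJ_closed[OF f] morph_GJ_closed[OF g] by (intro bij_betw_byWitness) auto
  then interpret restriction_iso M e V W f
    using sV apex W f by unfold_locales
  show ?thesis by (rule Qrep_iso)
qed

lemma induced_simple_quotient:
  assumes W: "simple_GJ M e W"
  shows "rep_M M (ind M e W)
      \<and> subrep_M M (ind M e W) (Nset M e (ind M e W))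
      \<and> Nset M e (ind M e W) \<noteq> rcar (ind M e W)
      \<and> (\<forall>S. subrep_M M (ind M e W) S \<and> S \<noteq> rcar (ind M e W) \<longrightarrow> S \<subseteq> Nset M e (ind M e W))
      \<and> simple_M M (Qrep M e W)
      \<and> has_apex M (Qrep M e W) (Jclass M e)
      \<and> iso_GJ M e (res M e (Qrep M e W)) W"
  using ind_rep[OF simple_GJ_rep[OF W]] Nset_ind_subrep[OF simple_GJ_rep[OF W]] Nset_ind_ne_carrier[OF W]
    Nset_ind_maximal[OF W] Qrep_simple[OF W] Qrep_apex[OF W, unfolded J_def]
    res_Qrep_iso[OF simple_GJ_rep[OF W]] by blast

lemma restriction_simple_and_iso:
  assumes V: "simple_M M V" and apex: "has_apex M V (Jclass M e)"
  shows "simple_GJ M e (res M e V) \<and> iso_M M (Qrep M e (res M e V)) V"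
proof -
  have "Ann M V = IJ M J" using apex unfolding has_apex_def J_def by blast
  then have "simple_GJ M e (res M e V)" by (rule res_simple[OF _ V])
  then show ?thesis using Qrep_iso_of_iso_res[OF V apex simple_GJ_rep iso_GJ_refl] by blast
qed

lemma Qrep_iso_iff:
  assumes W: "simple_GJ M e W" and W': "simple_GJ M e W'"
  shows "iso_M M (Qrep M e W) (Qrep M e W') \<longleftrightarrow> iso_GJ M e W W'"
proof
  note res_iso = res_Qrep_iso[OF simple_GJ_rep[OF W]] res_Qrep_iso[OF simple_GJ_rep[OF W']]
  assume "iso_M M (Qrep M e W) (Qrep M e W')"
  then have "iso_GJ M e (res M e (Qrep M e W)) (res M e (Qrep M e W'))"
    by (rule iso_M_res[OF Qrep_rep[OF simple_GJ_rep[OF W]] Qrep_rep[OF simple_GJ_rep[OF W']]])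
  then show "iso_GJ M e W W'" using iso_GJ_trans[OF iso_GJ_trans[OF iso_GJ_sym[OF res_iso(1)]] res_iso(2)] by blast
next
  assume "iso_GJ M e W W'"
  then have "iso_GJ M e W (res M e (Qrep M e W'))"
    using iso_GJ_trans iso_GJ_sym[OF res_Qrep_iso[OF simple_GJ_rep[OF W']]] by blast
  then show "iso_M M (Qrep M e W) (Qrep M e W')"
    using Qrep_iso_of_iso_res[OF Qrep_simple[OF W'] Qrep_apex[OF W', unfolded J_def] simple_GJ_rep[OF W]] by blast
qed

end

theorem theoremA:
  fixes M :: "'m lmonoid" and e :: 'm
  assumes "Glinear_monoid M" and "left_inductive M"
    and "idem M e" and "e \<noteq> mzer M"
  shows
    "(\<forall>V :: ('m, 'w) obj. simple_GJ M e V \<longrightarrow>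
        rep_M M (ind M e V)
      \<and> subrep_M M (ind M e V) (Nset M e (ind M e V))
      \<and> Nset M e (ind M e V) \<noteq> rcar (ind M e V)
      \<and> (\<forall>S. subrep_M M (ind M e V) S \<and> S \<noteq> rcar (ind M e V) \<longrightarrow> S \<subseteq> Nset M e (ind M e V))
      \<and> simple_M M (Qrep M e V)
      \<and> has_apex M (Qrep M e V) (Jclass M e)
      \<and> iso_GJ M e (res M e (Qrep M e V)) V)
   \<and> (\<forall>V :: ('m, 'v) obj. simple_M M V \<and> has_apex M V (Jclass M e) \<longrightarrow>
        simple_GJ M e (res M e V) \<and> iso_M M (Qrep M e (res M e V)) V)
   \<and> (\<forall>(V :: ('m, 'u) obj) (V' :: ('m, 'w) obj). simple_GJ M e V \<and> simple_GJ M e V' \<longrightarrow>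
        (iso_M M (Qrep M e V) (Qrep M e V') \<longleftrightarrow> iso_GJ M e V V'))"
proof -
  interpret principal_idempotent M e
    using assms by unfold_locales
  show ?thesis
    using induced_simple_quotient restriction_simple_and_iso Qrep_iso_iff by blast
qed

end
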